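(* For bivariate copulas $D_n$ ($n\in\mathbb{N}$) and $D$, consider: (i) $D_n\xrightarrow{\partial_2}D$; (ii) $\mathcal{T}(D_n)\xrightarrow{\partial_2}\mathcal{T}(D)$; (iii) $\mathcal{T}(D_n)\to\mathcal{T}(D)$ uniformly on $[0,1]^2$; (iv) $\mathcal{T}^2(D_n)\xrightarrow{\partial_2}\mathcal{T}^2(D)$; (v) $\mathcal{T}^2(D_n)\to\mathcal{T}^2(D)$ uniformly on $[0,1]^2$. Then (i) implies (ii), and (ii), (iii), (iv), (v) are equivalent.
   Context: $\Pi(u,v)=uv$; $\partial_2$ the partial derivative in the second argument; $D\vee E(u,v):=\int_0^1\min\{\partial_2D(u,t),\partial_2E(v,t)\}\,dt$; $\mathcal{T}(C):=C\vee\Pi$, $\mathcal{T}^2=\mathcal{T}\circ\mathcal{T}$. $D_n\xrightarrow{\partial_2}D$ means $\int_0^1|\partial_2D_n(u,t)-\partial_2D(u,t)|\,dt\to0$ for all $u\in[0,1]$. *)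

theory Defs
  imports "HOL-Analysis.Analysis"
begin

text \<open>Bivariate copulas, represented as functions real => real => real; only the
values on the unit square [0,1]^2 matter.\<close>
definition copula :: "(real \<Rightarrow> real \<Rightarrow> real) \<Rightarrow> bool" where
  "copula C \<longleftrightarrow>
     (\<forall>u\<in>{0..1}. C u 0 = 0 \<and> C 0 u = 0 \<and> C u 1 = u \<and> C 1 u = u) \<and>
     (\<forall>u1 u2 v1 v2. 0 \<le> u1 \<and> u1 \<le> u2 \<and> u2 \<le> 1 \<and> 0 \<le> v1 \<and> v1 \<le> v2 \<and> v2 \<le> 1 \<longrightarrow>
        0 \<le> C u2 v2 - C u1 v2 - C u2 v1 + C u1 v1)"

definition Pi_cop :: "real \<Rightarrow> real \<Rightarrow> real" where
  "Pi_cop u v = u * v"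

text \<open>Partial derivative in the second argument (set to 0 where it does not exist;
this only happens on a Lebesgue null set of t for copulas).\<close>
definition partial2 :: "(real \<Rightarrow> real \<Rightarrow> real) \<Rightarrow> real \<Rightarrow> real \<Rightarrow> real" where
  "partial2 D u t = (if (\<lambda>s. D u s) differentiable (at t) then deriv (\<lambda>s. D u s) t else 0)"

definition join_op :: "(real \<Rightarrow> real \<Rightarrow> real) \<Rightarrow> (real \<Rightarrow> real \<Rightarrow> real) \<Rightarrow> real \<Rightarrow> real \<Rightarrow> real" where
  "join_op D E u v = (LINT t:{0..1}|lebesgue. min (partial2 D u t) (partial2 E v t))"

definition T_op :: "(real \<Rightarrow> real \<Rightarrow> real) \<Rightarrow> real \<Rightarrow> real \<Rightarrow> real" where
  "T_op C = join_op C Pi_cop"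

definition partial2_conv :: "(nat \<Rightarrow> real \<Rightarrow> real \<Rightarrow> real) \<Rightarrow> (real \<Rightarrow> real \<Rightarrow> real) \<Rightarrow> bool" where
  "partial2_conv Ds D \<longleftrightarrow>
     (\<forall>u\<in>{0..1}. (\<lambda>n. LINT t:{0..1}|lebesgue. \<bar>partial2 (Ds n) u t - partial2 D u t\<bar>) \<longlonglongrightarrow> 0)"

definition unif_conv_sq :: "(nat \<Rightarrow> real \<Rightarrow> real \<Rightarrow> real) \<Rightarrow> (real \<Rightarrow> real \<Rightarrow> real) \<Rightarrow> bool" where
  "unif_conv_sq Ds D \<longleftrightarrow>
     uniform_limit ({0..1} \<times> {0..1}) (\<lambda>n (u, v). Ds n u v) (\<lambda>(u, v). D u v) sequentially"

end

theory Submission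
  imports Defs
begin

lemma Vitali_fine_intervals:
  fixes E U :: "real set" and P :: "real \<Rightarrow> real \<Rightarrow> bool"
  assumes U: "open U" "E \<subseteq> U"
    and fine: "\<And>x d. x \<in> E \<Longrightarrow> 0 < d \<Longrightarrow> \<exists>a b. a \<le> x \<and> x \<le> b \<and> a < b \<and> b - a < d \<and> P a b"
  obtains C where "countable C" "\<And>a b. (a, b) \<in> C \<Longrightarrow> a < b \<and> {a..b} \<subseteq> U \<and> P a b"
    "disjoint_family_on (\<lambda>(a, b). {a..b}) C" "negligible (E - (\<Union>(a, b)\<in>C. {a..b}))"
proof -
  define K where "K = {(a, b). a < b \<and> {a..b} \<subseteq> U \<and> P a b}"
  define c where "c = (\<lambda>(a, b). (a + b) / 2 :: real)"
  define r where "r = (\<lambda>(a, b). (b - a) / 2 :: real)"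
  have cball_eq: "cball (c i) (r i) = (\<lambda>(a, b). {a..b}) i" for i
    by (cases i) (simp add: c_def r_def cball_eq_atLeastAtMost field_simps)
  have cover: "\<exists>i. i \<in> K \<and> x \<in> cball (c i) (r i) \<and> r i < d" if x: "x \<in> E" and "0 < d" for x d
  proof -
    obtain \<delta> where "0 < \<delta>" and \<delta>: "ball x \<delta> \<subseteq> U"
      using U x by (meson open_contains_ball subsetD)
    obtain a b where ab: "a \<le> x" "x \<le> b" "a < b" "b - a < min d \<delta>" "P a b"
      using fine[OF x, of "min d \<delta>"] \<open>0 < \<delta>\<close> \<open>0 < d\<close> by auto
    moreover have "{a..b} \<subseteq> U"
      using ab \<delta> by (force simp: dist_real_def)
    ultimately show ?thesis
      unfolding cball_eq by (intro exI[of _ "(a, b)"]) (auto simp: K_def r_def dist_real_def)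
  qed
  obtain C where C: "countable C" "C \<subseteq> K"
     "pairwise (\<lambda>i j. disjnt (cball (c i) (r i)) (cball (c j) (r j))) C"
     "negligible (E - (\<Union>i\<in>C. cball (c i) (r i)))"
    by (rule Vitali_covering_theorem_cballs[of K r E c]) (use cover in \<open>simp_all add: K_def r_def split: prod.splits\<close>)
  show thesis
  proof (rule that[OF C(1)])
    show "disjoint_family_on (\<lambda>(a, b). {a..b}) C"
      using C(3) unfolding cball_eq disjoint_family_on_def pairwise_def disjnt_def by auto
  qed (use C(2,4) in \<open>auto simp: K_def cball_eq\<close>)
qed

lemma emeasure_interval_measure_UN_Icc:
  fixes g :: "real \<Rightarrow> real"
  assumes g: "mono g" "continuous_on UNIV g" and C: "countable C"
    "disjoint_family_on (\<lambda>(a, b). {a..b}) C" "\<And>a b. (a, b) \<in> C \<Longrightarrow> a \<le> b"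
  shows "emeasure (interval_measure g) (\<Union>(a, b)\<in>C. {a..b})
    = (\<integral>\<^sup>+ i. ennreal (g (snd i) - g (fst i)) \<partial>count_space C)"
proof -
  have "emeasure (interval_measure g) (\<Union>(a, b)\<in>C. {a..b})
      = (\<integral>\<^sup>+ i. emeasure (interval_measure g) ((\<lambda>(a, b). {a..b}) i) \<partial>count_space C)"
    by (rule emeasure_UN_countable) (auto simp: C split: prod.splits)
  also have "\<dots> = (\<integral>\<^sup>+ i. ennreal (g (snd i) - g (fst i)) \<partial>count_space C)"
    using C(3) g by (intro nn_integral_cong) (auto simp: mono_def emeasure_interval_measure_Icc)
  finally show ?thesis .
qed

lemma emeasure_lebesgue_UN_Icc:
  assumes C: "countable C" "disjoint_family_on (\<lambda>(a, b). {a..b}) C" "\<And>a b. (a, b) \<in> C \<Longrightarrow> a \<le> b"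
  shows "emeasure lebesgue (\<Union>(a, b)\<in>C. {a..b}) = (\<integral>\<^sup>+ i. ennreal (snd i - fst i) \<partial>count_space C)"
proof -
  have "(\<Union>(a, b)\<in>C. {a..b}) \<in> sets borel"
    using C(1) by (intro sets.countable_UN'') (auto split: prod.splits)
  then have "emeasure lebesgue (\<Union>(a, b)\<in>C. {a..b}) = emeasure (interval_measure (\<lambda>x. x)) (\<Union>(a, b)\<in>C. {a..b})"
    by (simp add: lborel_eq_real[symmetric])
  also have "\<dots> = (\<integral>\<^sup>+ i. ennreal (snd i - fst i) \<partial>count_space C)"
    by (rule emeasure_interval_measure_UN_Icc) (auto simp: C mono_def)
  finally show ?thesis .
qed

lemma interval_measure_le_fine_cover:
  fixes g :: "real \<Rightarrow> real"
  assumes g: "mono g" "continuous_on UNIV g" and "0 \<le> r" and T: "open T" "E \<subseteq> T"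
    and fine: "\<And>x d. x \<in> E \<Longrightarrow> 0 < d \<Longrightarrow>
      \<exists>a b. a \<le> x \<and> x \<le> b \<and> a < b \<and> b - a < d \<and> g b - g a < r * (b - a)"
  obtains V where "open V" "V \<subseteq> T" "negligible (E - V)"
    "emeasure (interval_measure g) V \<le> ennreal r * emeasure lebesgue T"
proof -
  obtain C where C: "countable C" "\<And>a b. (a, b) \<in> C \<Longrightarrow> a < b \<and> {a..b} \<subseteq> T \<and> g b - g a < r * (b - a)"
    "disjoint_family_on (\<lambda>(a, b). {a..b}) C" "negligible (E - (\<Union>(a, b)\<in>C. {a..b}))"
    by (rule Vitali_fine_intervals[OF T fine]) blast+
  define W where "W = (\<Union>(a, b)\<in>C. {a..b})"
  define V where "V = (\<Union>(a, b)\<in>C. {a<..<b})"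
  have "W \<in> sets borel" "W \<subseteq> T"
    using C unfolding W_def by (auto intro!: sets.countable_UN'' split: prod.splits)
  have "V \<subseteq> W"
    unfolding V_def W_def by (intro UN_mono) (auto split: prod.splits)
  have "negligible (\<Union>(a, b)\<in>C. {a, b})"
    by (rule negligible_countable_Union) (auto simp: C(1) split: prod.splits)
  then have "negligible (E - V)"
    by (rule negligible_subset[OF negligible_Un[OF C(4)]]) (force simp: V_def)
  moreover have "emeasure (interval_measure g) V \<le> ennreal r * emeasure lebesgue T"
  proof -
    have "emeasure (interval_measure g) V \<le> emeasure (interval_measure g) W"
      using \<open>V \<subseteq> W\<close> \<open>W \<in> sets borel\<close> by (intro emeasure_mono) auto
    also have "\<dots> = (\<integral>\<^sup>+ i. ennreal (g (snd i) - g (fst i)) \<partial>count_space C)"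
      unfolding W_def using C by (intro emeasure_interval_measure_UN_Icc g) force+
    also have "\<dots> \<le> (\<integral>\<^sup>+ i. ennreal r * ennreal (snd i - fst i) \<partial>count_space C)"
      using C(2) \<open>0 \<le> r\<close> by (intro nn_integral_mono) (force simp: ennreal_mult[symmetric] intro: ennreal_leI)
    also have "\<dots> = ennreal r * emeasure lebesgue W"
      unfolding W_def using C by (simp add: nn_integral_cmult emeasure_lebesgue_UN_Icc less_imp_le)
    also have "\<dots> \<le> ennreal r * emeasure lebesgue T"
      using \<open>W \<subseteq> T\<close> \<open>open T\<close> by (intro mult_left_mono emeasure_mono) auto
    finally show ?thesis .
  qed
  moreover have "open V"
    unfolding V_def by (intro open_UN) (auto split: prod.splits)
  moreover have "V \<subseteq> T"
    using \<open>V \<subseteq> W\<close> \<open>W \<subseteq> T\<close> by (rule order_trans)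
  ultimately show thesis
    by (intro that)
qed

lemma interval_measure_ge_fine_cover:
  fixes g :: "real \<Rightarrow> real"
  assumes g: "mono g" "continuous_on UNIV g" and "0 \<le> s" and V: "open V" "E \<subseteq> V"
    and E: "E \<in> sets lebesgue"
    and fine: "\<And>x d. x \<in> E \<Longrightarrow> 0 < d \<Longrightarrow>
      \<exists>a b. a \<le> x \<and> x \<le> b \<and> a < b \<and> b - a < d \<and> s * (b - a) < g b - g a"
  shows "ennreal s * emeasure lebesgue E \<le> emeasure (interval_measure g) V"
proof -
  obtain C where C: "countable C" "\<And>a b. (a, b) \<in> C \<Longrightarrow> a < b \<and> {a..b} \<subseteq> V \<and> s * (b - a) < g b - g a"
    "disjoint_family_on (\<lambda>(a, b). {a..b}) C" "negligible (E - (\<Union>(a, b)\<in>C. {a..b}))"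
    by (rule Vitali_fine_intervals[OF V fine]) blast+
  define W where "W = (\<Union>(a, b)\<in>C. {a..b})"
  have "W \<in> sets borel" "W \<subseteq> V"
    using C unfolding W_def by (auto intro!: sets.countable_UN'' split: prod.splits)
  have W_lebesgue: "W \<in> sets lebesgue"
    using \<open>W \<in> sets borel\<close> by simp
  have "E - W \<in> null_sets lebesgue"
    using C(4) unfolding W_def negligible_iff_null_sets .
  have "emeasure lebesgue E \<le> emeasure lebesgue (W \<union> (E - W))"
    using W_lebesgue E by (intro emeasure_mono) auto
  also have "\<dots> = emeasure lebesgue W"
    using W_lebesgue \<open>E - W \<in> null_sets lebesgue\<close> by (rule emeasure_Un_null_set)
  finally have "ennreal s * emeasure lebesgue E \<le> ennreal s * emeasure lebesgue W"
    by (rule mult_left_mono) simp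
  also have "\<dots> = (\<integral>\<^sup>+ i. ennreal s * ennreal (snd i - fst i) \<partial>count_space C)"
    unfolding W_def using C by (simp add: nn_integral_cmult emeasure_lebesgue_UN_Icc less_imp_le)
  also have "\<dots> \<le> (\<integral>\<^sup>+ i. ennreal (g (snd i) - g (fst i)) \<partial>count_space C)"
    using C(2) \<open>0 \<le> s\<close> by (intro nn_integral_mono) (force simp: ennreal_mult[symmetric] intro: ennreal_leI)
  also have "\<dots> = emeasure (interval_measure g) W"
    unfolding W_def using C by (intro emeasure_interval_measure_UN_Icc[symmetric] g) force+
  also have "\<dots> \<le> emeasure (interval_measure g) V"
    using \<open>W \<subseteq> V\<close> \<open>open V\<close> by (intro emeasure_mono) auto
  finally show ?thesis .
qed

lemma dini_null_set:
  fixes g :: "real \<Rightarrow> real"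
  assumes g: "mono g" "continuous_on UNIV g" and rs: "0 \<le> r" "r < s" and E: "E \<in> sets lebesgue"
    and slow: "\<And>x d. x \<in> E \<Longrightarrow> 0 < d \<Longrightarrow>
      \<exists>a b. a \<le> x \<and> x \<le> b \<and> a < b \<and> b - a < d \<and> g b - g a < r * (b - a)"
    and fast: "\<And>x d. x \<in> E \<Longrightarrow> 0 < d \<Longrightarrow>
      \<exists>a b. a \<le> x \<and> x \<le> b \<and> a < b \<and> b - a < d \<and> s * (b - a) < g b - g a"
  shows "E \<in> null_sets lebesgue"
proof -
  have "E \<inter> {-k..k} \<in> null_sets lebesgue" for k :: real
  proof -
    define F where "F = E \<inter> {-k..k}"
    have F: "F \<in> lmeasurable"
      unfolding F_def using E by (intro bounded_set_imp_lmeasurable) auto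
    define m where "m = measure lebesgue F"
    have approx: "s * m \<le> r * m + r * e" if "0 < e" for e
    proof -
      obtain T where T: "open T" "F \<subseteq> T" "T - F \<in> lmeasurable" "emeasure lebesgue (T - F) < ennreal e"
        using sets_lebesgue_outer_open[of F e] F \<open>0 < e\<close> by (auto simp: fmeasurable_def)
      obtain V where V: "open V" "V \<subseteq> T" "negligible (F - V)"
        "emeasure (interval_measure g) V \<le> ennreal r * emeasure lebesgue T"
        by (rule interval_measure_le_fine_cover[OF g rs(1) T(1,2)]) (use slow in \<open>auto simp: F_def\<close>)
      have F_V: "F \<inter> V \<in> sets lebesgue" "F - V \<in> null_sets lebesgue"
        using F V(1,3) by (auto simp: negligible_iff_null_sets fmeasurable_def)
      have "emeasure lebesgue F = emeasure lebesgue ((F \<inter> V) \<union> (F - V))"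
        by (simp add: Int_Diff_Un)
      also have "\<dots> = emeasure lebesgue (F \<inter> V)"
        using F_V by (rule emeasure_Un_null_set)
      also have "ennreal s * \<dots> \<le> emeasure (interval_measure g) V"
        by (rule interval_measure_ge_fine_cover[OF g _ V(1) _ F_V(1)]) (use rs fast in \<open>auto simp: F_def\<close>)
      also have "\<dots> \<le> ennreal r * emeasure lebesgue T"
        by (rule V(4))
      also have "emeasure lebesgue T = emeasure lebesgue (F \<union> (T - F))"
        using T(2) by (simp add: Un_absorb1)
      also have "\<dots> \<le> emeasure lebesgue F + emeasure lebesgue (T - F)"
        using F T(3) by (intro emeasure_subadditive) auto
      also have "\<dots> \<le> ennreal m + ennreal e"
        using F T(4) unfolding m_def by (intro add_mono) (auto simp: emeasure_eq_measure2)
      also have "\<dots> = ennreal (m + e)"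
        using \<open>0 < e\<close> unfolding m_def by (simp add: ennreal_plus)
      finally have "ennreal (s * m) \<le> ennreal (r * (m + e))"
        using rs F \<open>0 < e\<close> unfolding m_def by (simp add: emeasure_eq_measure2 ennreal_mult mult_left_mono)
      then show ?thesis
        using rs \<open>0 < e\<close> unfolding m_def by (subst (asm) ennreal_le_iff) (auto simp: algebra_simps)
    qed
    have "s * m \<le> r * m + e" if "0 < e" for e
    proof -
      have "s * m \<le> r * m + r * (e / (r + 1))"
        using approx[of "e / (r + 1)"] that rs by simp
      also have "r * (e / (r + 1)) \<le> e"
        using rs that by (simp add: field_simps)
      finally show ?thesis by simp
    qed
    then have "s * m \<le> r * m"
      by (rule field_le_epsilon)
    then have "m \<le> 0"
      using rs(2) by (meson mult_strict_right_mono not_le)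
    then have "m = 0"
      unfolding m_def using measure_nonneg[of lebesgue F] by linarith
    then show ?thesis
      using F unfolding F_def m_def by (simp add: null_sets_def emeasure_eq_measure2 fmeasurableD)
  qed
  then have "(\<Union>n::nat. E \<inter> {- real n..real n}) \<in> null_sets lebesgue"
    by blast
  moreover have "E = (\<Union>n::nat. E \<inter> {- real n..real n})"
  proof (intro equalityI subsetI)
    fix x assume "x \<in> E"
    obtain n where "\<bar>x\<bar> \<le> real n"
      using real_arch_simple by blast
    with \<open>x \<in> E\<close> show "x \<in> (\<Union>n::nat. E \<inter> {- real n..real n})"
      by (intro UN_I[of n]) (auto simp: abs_le_iff)
  qed auto
  ultimately show ?thesis
    by simp
qed

lemma borel_frequently_at_right:
  fixes P :: "real \<Rightarrow> real \<Rightarrow> bool"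
  assumes "\<And>h. 0 < h \<Longrightarrow> open {x. P x h}"
  shows "{x. \<exists>\<^sub>F h in at_right 0. P x h} \<in> sets borel"
proof -
  have freq: "(\<exists>\<^sub>F h in at_right 0. P x h) \<longleftrightarrow> (\<forall>d>0. \<exists>h>0. h < d \<and> P x h)" for x
    unfolding frequently_def eventually_at_right_field by auto
  have "{x. \<exists>\<^sub>F h in at_right 0. P x h} = (\<Inter>n::nat. \<Union>h\<in>{0<..<1 / Suc n}. {x. P x h})"
  proof (intro set_eqI iffI)
    fix x assume x: "x \<in> (\<Inter>n::nat. \<Union>h\<in>{0<..<1 / Suc n}. {x. P x h})"
    have "\<exists>h>0. h < d \<and> P x h" if d: "0 < d" for d
    proof -
      obtain n where "inverse (real (Suc n)) < d"
        using reals_Archimedean[OF d] by blast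
      moreover obtain h where "h \<in> {0<..<1 / Suc n}" "P x h"
        using x by blast
      ultimately show ?thesis
        by (auto simp: inverse_eq_divide)
    qed
    then show "x \<in> {x. \<exists>\<^sub>F h in at_right 0. P x h}"
      by (simp add: freq)
  next
    fix x assume "x \<in> {x. \<exists>\<^sub>F h in at_right 0. P x h}"
    then have small: "\<forall>d>0. \<exists>h>0. h < d \<and> P x h"
      by (simp add: freq)
    have "\<exists>h\<in>{0<..<1 / Suc n}. P x h" for n :: nat
      using small[rule_format, of "1 / Suc n"] by auto
    then show "x \<in> (\<Inter>n::nat. \<Union>h\<in>{0<..<1 / Suc n}. {x. P x h})"
      by blast
  qed
  also have "\<dots> \<in> sets borel"
    using assms by (intro sets.countable_INT'' sets.countable_UN'' borel_open) auto
  finally show ?thesis .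
qed

lemma borel_frequently_at_left:
  fixes P :: "real \<Rightarrow> real \<Rightarrow> bool"
  assumes "\<And>h. h < 0 \<Longrightarrow> open {x. P x h}"
  shows "{x. \<exists>\<^sub>F h in at_left 0. P x h} \<in> sets borel"
  using borel_frequently_at_right[of "\<lambda>x h. P x (- h)"] assms
  by (simp add: at_left_minus[of 0] frequently_filtermap)

lemma tendsto_at_0_if_no_crossing:
  fixes q :: "real \<Rightarrow> real"
  assumes q: "\<And>h. h \<noteq> 0 \<Longrightarrow> 0 \<le> q h \<and> q h \<le> 1"
    and no_crossing: "\<And>r s F G. r \<in> \<rat> \<Longrightarrow> s \<in> \<rat> \<Longrightarrow> 0 < r \<Longrightarrow> r < s \<Longrightarrow>
      {F, G} = {at_left 0, at_right 0} \<Longrightarrow> \<not> ((\<exists>\<^sub>F h in F. q h < r) \<and> (\<exists>\<^sub>F h in G. s < q h))"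
  obtains l where "(q \<longlongrightarrow> l) (at 0)"
proof -
  define Q where "Q h = ereal (q h)" for h
  have bounded: "\<forall>\<^sub>F h in F. 0 \<le> Q h \<and> Q h \<le> 1" if "F \<in> {at_left 0, at_right 0}" for F
  proof -
    have "\<forall>\<^sub>F h in at (0::real). 0 \<le> Q h \<and> Q h \<le> 1"
      unfolding eventually_at_filter Q_def using q by (intro always_eventually) auto
    moreover have "F \<le> at 0"
      using that at_le[OF subset_UNIV] by auto
    ultimately show ?thesis
      by (rule filter_leD[rotated])
  qed
  have lower: "0 \<le> Liminf F Q" and upper: "Limsup F Q \<le> 1" if "F \<in> {at_left 0, at_right 0}" for F
    by (rule Liminf_bounded Limsup_bounded, rule eventually_mono[OF bounded[OF that]], simp)+
  have crossing: "Limsup G Q \<le> Liminf F Q" if FG: "{F, G} = {at_left 0, at_right 0}" for F G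
  proof (rule ccontr)
    assume "\<not> ?thesis"
    then have lt: "Liminf F Q < Limsup G Q"
      by simp
    have "F \<in> {at_left 0, at_right 0}" "G \<in> {at_left 0, at_right 0}"
      using FG by blast+
    then have "0 \<le> Liminf F Q" "Limsup G Q \<le> 1"
      by (simp_all add: lower upper)
    then obtain a b where ab: "Liminf F Q = ereal a" "Limsup G Q = ereal b" "0 \<le> a" "a < b"
      using lt by (cases "Liminf F Q"; cases "Limsup G Q") auto
    obtain r where r: "r \<in> \<rat>" "a < r" "r < b"
      using Rats_dense_in_real[OF \<open>a < b\<close>] by blast
    obtain s where s: "s \<in> \<rat>" "r < s" "s < b"
      using Rats_dense_in_real[OF \<open>r < b\<close>] by blast
    have "\<exists>\<^sub>F h in F. q h < r"
    proof (rule ccontr)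
      assume "\<not> ?thesis"
      then have "\<forall>\<^sub>F h in F. ereal r \<le> Q h"
        by (simp add: not_frequently Q_def not_less)
      then have "ereal r \<le> Liminf F Q"
        by (rule Liminf_bounded)
      then show False
        using ab r by simp
    qed
    moreover have "\<exists>\<^sub>F h in G. s < q h"
    proof (rule ccontr)
      assume "\<not> ?thesis"
      then have "\<forall>\<^sub>F h in G. Q h \<le> ereal s"
        by (simp add: not_frequently Q_def not_less)
      then have "Limsup G Q \<le> ereal s"
        by (rule Limsup_bounded)
      then show False
        using ab s by simp
    qed
    ultimately show False
      using no_crossing[OF r(1) s(1) _ s(2) FG] ab r by simp
  qed
  define l where "l = Limsup (at_right 0) Q"
  have "Liminf (at_right 0) Q \<le> l" "Liminf (at_left 0) Q \<le> Limsup (at_left 0) Q"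
    unfolding l_def by (auto intro: Liminf_le_Limsup)
  moreover have "l \<le> Liminf (at_left 0) Q" "Limsup (at_left 0) Q \<le> Liminf (at_right 0) Q"
    unfolding l_def by (auto intro: crossing)
  ultimately have lim: "Liminf (at_right 0) Q = l" "Limsup (at_left 0) Q = l" "Liminf (at_left 0) Q = l"
    by (auto intro: order.antisym order.trans)
  have "(Q \<longlongrightarrow> l) (at_right 0)" "(Q \<longlongrightarrow> l) (at_left 0)"
    using lim l_def by (auto intro: Liminf_eq_Limsup)
  moreover have "0 \<le> l" "l \<le> 1"
    using lim lower[of "at_right 0"] upper[of "at_right 0"] unfolding l_def by auto
  then obtain l' where "l = ereal l'"
    by (cases l) auto
  ultimately have "(q \<longlongrightarrow> l') (at_left 0)" "(q \<longlongrightarrow> l') (at_right 0)"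
    unfolding Q_def by auto
  then show thesis
    by (intro that filterlim_split_at_real)
qed

theorem mono_lipschitz_differentiable_ae:
  fixes g :: "real \<Rightarrow> real"
  assumes mono: "mono g" and lip: "\<And>x y. \<bar>g x - g y\<bar> \<le> \<bar>x - y\<bar>"
  shows "AE x in lebesgue. g differentiable (at x)"
proof -
  define q where "q x h = (g (x + h) - g x) / h" for x h
  have cont: "continuous_on UNIV g"
    using lip by (intro lipschitz_on_continuous_on[of 1] lipschitz_onI) (auto simp: dist_real_def)
  have q01: "0 \<le> q x h \<and> q x h \<le> 1" if "h \<noteq> 0" for x h
    using that mono[THEN monoD, of x "x + h"] mono[THEN monoD, of "x + h" x] lip[of "x + h" x]
    by (cases "0 < h") (auto simp: q_def field_simps)
  have slope: "\<exists>a b. a \<le> x \<and> x \<le> b \<and> a < b \<and> b - a < d \<and> P ((g b - g a) / (b - a))"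
    if "\<exists>\<^sub>F h in F. P (q x h)" "F \<in> {at_left 0, at_right 0}" "0 < d" for P F x d
  proof -
    have "F \<le> at 0"
      using that(2) at_le[OF subset_UNIV] by auto
    then have "\<exists>\<^sub>F h in at 0. P (q x h)"
      using that(1) filter_leD unfolding frequently_def by blast
    then obtain h where "h \<noteq> 0" "\<bar>h\<bar> < d" "P (q x h)"
      using \<open>0 < d\<close> unfolding frequently_at by (auto simp: dist_real_def)
    show ?thesis
    proof (cases "0 < h")
      case True
      then show ?thesis
        using \<open>\<bar>h\<bar> < d\<close> \<open>P (q x h)\<close> by (intro exI[of _ x] exI[of _ "x + h"]) (auto simp: q_def)
    next
      case False
      have "(g x - g (x + h)) / (x - (x + h)) = q x h"
        unfolding q_def by (metis add_diff_cancel_left' minus_diff_eq minus_divide_divide)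
      then show ?thesis
        using False \<open>h \<noteq> 0\<close> \<open>\<bar>h\<bar> < d\<close> \<open>P (q x h)\<close> by (intro exI[of _ "x + h"] exI[of _ x]) auto
    qed
  qed
  define S where "S = (\<lambda>(r, s, F, G). {x. (\<exists>\<^sub>F h in F. q x h < r) \<and> (\<exists>\<^sub>F h in G. s < q x h)})"
  define I where "I = {(r, s, F, G). (r::real) \<in> \<rat> \<and> s \<in> \<rat> \<and> 0 < r \<and> r < s \<and> {F, G} = {at_left (0::real), at_right 0}}"
  have "countable I"
    by (rule countable_subset[of _ "\<rat> \<times> \<rat> \<times> {at_left 0, at_right 0} \<times> {at_left 0, at_right 0}"])
      (auto simp: I_def countable_rat doubleton_eq_iff)
  moreover have "S i \<in> null_sets lebesgue" if "i \<in> I" for i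
  proof -
    obtain r s F G where i: "i = (r, s, F, G)" "0 < r" "r < s" "{F, G} = {at_left 0, at_right 0}"
      using \<open>i \<in> I\<close> by (auto simp: I_def)
    have borel: "{x. \<exists>\<^sub>F h in F. P x h} \<in> sets borel"
      if "F \<in> {at_left 0, at_right 0}" "\<And>h. h \<noteq> 0 \<Longrightarrow> open {x. P x h}"
      for F and P :: "real \<Rightarrow> real \<Rightarrow> bool"
    proof -
      have "{x. \<exists>\<^sub>F h in at_left 0. P x h} \<in> sets borel"
        by (rule borel_frequently_at_left[of P]) (use that(2) in simp)
      moreover have "{x. \<exists>\<^sub>F h in at_right 0. P x h} \<in> sets borel"
        by (rule borel_frequently_at_right[of P]) (use that(2) in simp)
      ultimately show ?thesis
        using that(1) by auto
    qed
    have open_q: "open {x. q x h < r}" "open {x. s < q x h}" if "h \<noteq> 0" for h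
      unfolding q_def using that
      by (auto intro!: open_Collect_less continuous_intros continuous_on_compose2[OF cont])
    have FG: "F \<in> {at_left 0, at_right 0}" "G \<in> {at_left 0, at_right 0}"
      using i(4) by blast+
    show ?thesis
      unfolding i S_def
    proof (simp, rule dini_null_set[OF mono cont less_imp_le[OF i(2)] i(3)])
      show "{x. (\<exists>\<^sub>F h in F. q x h < r) \<and> (\<exists>\<^sub>F h in G. s < q x h)} \<in> sets lebesgue"
        using FG borel[OF _ open_q(1)] borel[OF _ open_q(2)] by (auto simp: Collect_conj_eq)
    next
      fix x d :: real
      assume "x \<in> {x. (\<exists>\<^sub>F h in F. q x h < r) \<and> (\<exists>\<^sub>F h in G. s < q x h)}" "0 < d"
      then obtain a b a' b' where
        "a \<le> x" "x \<le> b" "a < b" "b - a < d" "(g b - g a) / (b - a) < r" and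
        "a' \<le> x" "x \<le> b'" "a' < b'" "b' - a' < d" "s < (g b' - g a') / (b' - a')"
        using slope[of "\<lambda>y. y < r" x F d] slope[of "\<lambda>y. s < y" x G d] FG by auto
      then show "\<exists>a b. a \<le> x \<and> x \<le> b \<and> a < b \<and> b - a < d \<and> g b - g a < r * (b - a)"
        and "\<exists>a b. a \<le> x \<and> x \<le> b \<and> a < b \<and> b - a < d \<and> s * (b - a) < g b - g a"
        by (auto simp: pos_divide_less_eq pos_less_divide_eq)
    qed
  qed
  ultimately have "AE x in lebesgue. \<forall>i\<in>I. x \<notin> S i"
    by (intro AE_ball_countable' AE_not_in)
  then show ?thesis
  proof (rule eventually_mono)
    fix x assume x: "\<forall>i\<in>I. x \<notin> S i"
    obtain l where "(q x \<longlongrightarrow> l) (at 0)"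
    proof (rule tendsto_at_0_if_no_crossing[of "q x"])
      show "\<not> ((\<exists>\<^sub>F h in F. q x h < r) \<and> (\<exists>\<^sub>F h in G. s < q x h))"
        if "r \<in> \<rat>" "s \<in> \<rat>" "0 < r" "r < s" "{F, G} = {at_left 0, at_right 0}" for r s F G
        using x[rule_format, of "(r, s, F, G)"] that by (auto simp: I_def S_def)
    qed (use q01 in auto)
    then show "g differentiable (at x)"
      unfolding real_differentiable_def DERIV_def q_def by blast
  qed
qed

abbreviation M01 :: "real measure" where
  "M01 \<equiv> lebesgue_on {0..1}"

lemma finite_measure_M01: "finite_measure M01"
  by (rule finite_measure_lebesgue_on) simp

lemma sets_M01: "A \<in> sets M01 \<longleftrightarrow> A \<subseteq> {0..1} \<and> A \<in> sets lebesgue"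
  by (simp add: sets_restrict_space_iff)

lemma emeasure_M01: "A \<subseteq> {0..1} \<Longrightarrow> A \<in> sets lebesgue \<Longrightarrow> emeasure M01 A = emeasure lebesgue A"
  by (simp add: emeasure_restrict_space)

lemma measure_M01: "A \<subseteq> {0..1} \<Longrightarrow> A \<in> sets lebesgue \<Longrightarrow> measure M01 A = measure lebesgue A"
  by (simp add: measure_restrict_space)

lemma emeasure_M01_Ico: "0 \<le> a \<Longrightarrow> a \<le> 1 \<Longrightarrow> emeasure M01 {0..<a} = ennreal a"
  by (subst emeasure_M01) auto

lemma measure_M01_Ico: "0 \<le> a \<Longrightarrow> a \<le> b \<Longrightarrow> b \<le> 1 \<Longrightarrow> measure M01 {a..<b} = b - a"
  by (subst measure_restrict_space) auto

lemma measurable_id_M01[measurable]: "(\<lambda>x. x) \<in> borel_measurable M01"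
  by (intro measurable_restrict_space1) (simp add: measurable_completion)

lemma borel_measurable_M01: "f \<in> borel_measurable borel \<Longrightarrow> f \<in> borel_measurable M01"
  by (intro measurable_restrict_space1) (simp add: measurable_completion measurable_lborel2)

lemma borel_measurable_M01_AE:
  fixes f g :: "real \<Rightarrow> real"
  assumes "f \<in> borel_measurable M01" and "AE t in M01. f t = g t"
  shows "g \<in> borel_measurable M01"
proof -
  have "(\<lambda>t. indicator {0..1} t *\<^sub>R f t) \<in> borel_measurable lebesgue"
    using assms(1) by (simp add: borel_measurable_restrict_space_iff)
  moreover have "AE t in lebesgue. indicator {0..1} t *\<^sub>R f t = indicator {0..1} t *\<^sub>R g t"
    using assms(2) by (simp add: AE_restrict_space_iff) (auto elim: eventually_mono simp: indicator_def)
  ultimately have "(\<lambda>t. indicator {0..1} t *\<^sub>R g t) \<in> borel_measurable lebesgue"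
    by (rule borel_measurable_AE)
  then show ?thesis
    by (simp add: borel_measurable_restrict_space_iff)
qed

lemma AE_M01_not_in_countable: "countable C \<Longrightarrow> AE s in M01. s \<notin> C"
  by (rule AE_I'[where N="C \<inter> {0..1}"])
    (auto simp: null_sets_restrict_space intro: countable_imp_null_set_lborel null_sets_completionI)

lemma AE_M01_interior: "AE s in M01. 0 < s \<and> s < 1"
proof -
  have "AE s in M01. s \<notin> {0, 1}"
    by (rule AE_M01_not_in_countable) simp
  with AE_space[of M01] show ?thesis
    by eventually_elim auto
qed

lemma integrable_M01_bounded:
  fixes f :: "real \<Rightarrow> real"
  assumes "f \<in> borel_measurable M01" "AE s in M01. \<bar>f s\<bar> \<le> B"
  shows "integrable M01 f"
  using finite_measure.integrable_const_bound[OF finite_measure_M01, of f B] assms by auto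

lemma set_integral_eq_integral_M01:
  "(LINT t:{0..1}|lebesgue. f t) = integral\<^sup>L M01 (f :: real \<Rightarrow> real)"
  unfolding set_lebesgue_integral_def by (subst integral_restrict_space) auto

lemma borel_measurable_antimono: "antimono f \<Longrightarrow> (f :: real \<Rightarrow> real) \<in> borel_measurable borel"
  using borel_measurable_mono[of "\<lambda>x. - f x"] by (simp add: antimono_def mono_def)

lemma antimono_ctble_discont:
  assumes "antimono f" shows "countable {a. \<not> isCont (f :: real \<Rightarrow> real) a}"
proof (rule countable_subset)
  show "{a. \<not> isCont f a} \<subseteq> {a. \<not> isCont (\<lambda>x. - f x) a}"
    using isCont_minus[of _ "\<lambda>x. - f x"] by auto
  show "countable {a. \<not> isCont (\<lambda>x. - f x) a}"
    using assms by (intro mono_ctble_discont) (simp add: antimono_def mono_def)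
qed

definition unit_valued :: "(real \<Rightarrow> real) \<Rightarrow> bool" where
  "unit_valued X \<longleftrightarrow> X \<in> borel_measurable M01 \<and> (AE s in M01. 0 \<le> X s \<and> X s \<le> 1)"

definition survival :: "(real \<Rightarrow> real) \<Rightarrow> real \<Rightarrow> real" where
  "survival X t = measure M01 {s \<in> {0..1}. t < X s}"

definition min_integral :: "(real \<Rightarrow> real) \<Rightarrow> real \<Rightarrow> real" where
  "min_integral X v = integral\<^sup>L M01 (\<lambda>s. min (X s) v)"

definition L1_dist :: "(real \<Rightarrow> real) \<Rightarrow> (real \<Rightarrow> real) \<Rightarrow> real" where
  "L1_dist X Y = integral\<^sup>L M01 (\<lambda>t. \<bar>X t - Y t\<bar>)"

lemma unit_valued_measurable: "unit_valued X \<Longrightarrow> X \<in> borel_measurable M01"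
  by (simp add: unit_valued_def)

lemma unit_valued_AE: "unit_valued X \<Longrightarrow> AE s in M01. 0 \<le> X s \<and> X s \<le> 1"
  by (simp add: unit_valued_def)

lemma sets_M01_greater: "(X :: real \<Rightarrow> real) \<in> borel_measurable M01 \<Longrightarrow> {s \<in> {0..1}. t < X s} \<in> sets M01"
  using borel_measurable_iff_greater[of X M01] by simp

lemma survival_nonneg: "0 \<le> survival X t"
  by (simp add: survival_def)

lemma survival_le_1: "survival X t \<le> 1"
proof -
  have "measure M01 {s \<in> {0..1}. t < X s} \<le> measure M01 {0..1}"
    by (cases "{s \<in> {0..1}. t < X s} \<in> sets M01")
      (auto intro: finite_measure.finite_measure_mono[OF finite_measure_M01] simp: measure_notin_sets)
  then show ?thesis
    by (simp add: survival_def measure_restrict_space)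
qed

lemma survival_eq_integral: "survival X t = integral\<^sup>L M01 (indicator {s. t < X s})"
  unfolding survival_def integral_indicator by (simp add: Int_def conj_commute)

lemma antimono_survival: "X \<in> borel_measurable M01 \<Longrightarrow> antimono (survival X)"
  unfolding antimono_def survival_def
  by (intro allI impI finite_measure.finite_measure_mono[OF finite_measure_M01] sets_M01_greater) auto

lemma survival_measurable: "X \<in> borel_measurable M01 \<Longrightarrow> survival X \<in> borel_measurable M01"
  by (rule borel_measurable_M01[OF borel_measurable_antimono[OF antimono_survival]])

lemma unit_valued_survival: "X \<in> borel_measurable M01 \<Longrightarrow> unit_valued (survival X)"
  unfolding unit_valued_def using survival_measurable survival_nonneg survival_le_1 by blast

lemma integrable_min_M01: "unit_valued X \<Longrightarrow> integrable M01 (\<lambda>s. min (X s) v)"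
  by (rule integrable_M01_bounded[where B="max 1 \<bar>v\<bar>"])
    (auto simp: unit_valued_def elim!: eventually_mono)

lemma integrable_indicator_greater_M01:
  assumes "X \<in> borel_measurable M01"
  shows "integrable M01 (indicator {s. t < (X s :: real)} :: real \<Rightarrow> real)"
proof (rule integrable_M01_bounded[where B=1])
  have "{s \<in> space M01. t < X s} \<in> sets M01"
    using assms by measurable
  then have "(indicator {s \<in> space M01. t < X s} :: real \<Rightarrow> real) \<in> borel_measurable M01"
    by (rule borel_measurable_indicator)
  then show "(indicator {s. t < X s} :: real \<Rightarrow> real) \<in> borel_measurable M01"
    by (rule measurable_cong[THEN iffD1, rotated]) (auto simp: indicator_def)
qed (auto simp: indicator_def)

lemma min_integral_diff_bounds:
  assumes X: "unit_valued X" and "a \<le> b"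
  shows "(b - a) * survival X b \<le> min_integral X b - min_integral X a"
    and "min_integral X b - min_integral X a \<le> (b - a) * survival X a"
proof -
  have diff: "min_integral X b - min_integral X a = integral\<^sup>L M01 (\<lambda>s. min (X s) b - min (X s) a)"
    unfolding min_integral_def using integrable_min_M01[OF X] by simp
  have scaled: "(b - a) * survival X c = integral\<^sup>L M01 (\<lambda>s. (b - a) * indicator {s. c < X s} s)" for c
    unfolding survival_eq_integral by simp
  have integrable: "integrable M01 (\<lambda>s. (b - a) * indicator {s. c < X s} s)" for c
    using integrable_indicator_greater_M01[OF unit_valued_measurable[OF X]] by simp
  show "(b - a) * survival X b \<le> min_integral X b - min_integral X a"
    unfolding diff scaled using \<open>a \<le> b\<close> integrable_min_M01[OF X]
    by (intro integral_mono integrable) (auto simp: indicator_def)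
  show "min_integral X b - min_integral X a \<le> (b - a) * survival X a"
    unfolding diff scaled using \<open>a \<le> b\<close> integrable_min_M01[OF X]
    by (intro integral_mono integrable) (auto simp: indicator_def)
qed

lemma min_integral_slope_between:
  assumes X: "unit_valued X" and "h \<noteq> 0"
  shows "min (survival X t) (survival X (t + h)) \<le> (min_integral X (t + h) - min_integral X t) / h"
    and "(min_integral X (t + h) - min_integral X t) / h \<le> max (survival X t) (survival X (t + h))"
proof -
  have "survival X (t + h) \<le> (min_integral X (t + h) - min_integral X t) / h
    \<and> (min_integral X (t + h) - min_integral X t) / h \<le> survival X t" if "0 < h"
    using min_integral_diff_bounds[OF X, of t "t + h"] that by (simp add: field_simps)
  moreover have "survival X t \<le> (min_integral X (t + h) - min_integral X t) / h
    \<and> (min_integral X (t + h) - min_integral X t) / h \<le> survival X (t + h)" if "h < 0"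
    using min_integral_diff_bounds[OF X, of "t + h" t] that by (simp add: field_simps)
  ultimately show "min (survival X t) (survival X (t + h)) \<le> (min_integral X (t + h) - min_integral X t) / h"
    and "(min_integral X (t + h) - min_integral X t) / h \<le> max (survival X t) (survival X (t + h))"
    using \<open>h \<noteq> 0\<close> by (cases "0 < h"; force)+
qed

lemma min_integral_has_real_derivative:
  assumes X: "unit_valued X" and cont: "isCont (survival X) t"
  shows "(min_integral X has_real_derivative survival X t) (at t)"
proof -
  have "((\<lambda>h. survival X (t + h) - survival X t) \<longlongrightarrow> 0) (at 0)"
    using cont by (simp add: isCont_iff LIM_zero)
  then have "((\<lambda>h. \<bar>survival X (t + h) - survival X t\<bar>) \<longlongrightarrow> 0) (at 0)"
    by (rule tendsto_rabs_zero)
  moreover have "norm ((min_integral X (t + h) - min_integral X t) / h - survival X t)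
      \<le> \<bar>survival X (t + h) - survival X t\<bar>" if "h \<noteq> 0" for h
    using min_integral_slope_between[OF X that, of t] by (simp add: abs_le_iff min_def max_def split: if_splits)
  then have "\<forall>\<^sub>F h in at 0. norm ((min_integral X (t + h) - min_integral X t) / h - survival X t)
      \<le> \<bar>survival X (t + h) - survival X t\<bar>"
    unfolding eventually_at_filter by (intro always_eventually) simp
  ultimately have "((\<lambda>h. (min_integral X (t + h) - min_integral X t) / h - survival X t) \<longlongrightarrow> 0) (at 0)"
    by (rule Lim_null_comparison[rotated])
  then show ?thesis
    unfolding DERIV_def by (simp add: LIM_zero_iff)
qed

definition deriv0 :: "(real \<Rightarrow> real) \<Rightarrow> real \<Rightarrow> real" where
  "deriv0 f t = (if f differentiable (at t) then deriv f t else 0)"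

lemma deriv0_eqI: "(f has_real_derivative D) (at t) \<Longrightarrow> deriv0 f t = D"
  unfolding deriv0_def by (metis DERIV_imp_deriv real_differentiable_def)

lemma deriv0_min_integral_AE:
  assumes X: "unit_valued X"
  shows "AE t in M01. deriv0 (min_integral X) t = survival X t"
  using AE_M01_not_in_countable[OF antimono_ctble_discont[OF antimono_survival[OF unit_valued_measurable[OF X]]]]
  by eventually_elim (auto intro: deriv0_eqI min_integral_has_real_derivative[OF X])

lemma unit_valued_deriv0_min_integral:
  assumes X: "unit_valued X"
  shows "unit_valued (deriv0 (min_integral X))"
proof -
  have "deriv0 (min_integral X) \<in> borel_measurable M01"
    by (rule borel_measurable_M01_AE[OF survival_measurable[OF unit_valued_measurable[OF X]]])
      (use deriv0_min_integral_AE[OF X] in \<open>auto elim: eventually_mono\<close>)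
  moreover have "AE t in M01. 0 \<le> deriv0 (min_integral X) t \<and> deriv0 (min_integral X) t \<le> 1"
    using deriv0_min_integral_AE[OF X] by eventually_elim (simp add: survival_nonneg survival_le_1)
  ultimately show ?thesis
    by (simp add: unit_valued_def)
qed

lemma survival_cong_AE:
  assumes "X \<in> borel_measurable M01" "Y \<in> borel_measurable M01" "AE s in M01. X s = Y s"
  shows "survival X = survival Y"
proof
  fix t
  have "emeasure M01 {s \<in> {0..1}. t < X s} = emeasure M01 {s \<in> {0..1}. t < Y s}"
    using assms sets_M01_greater[OF assms(1)] sets_M01_greater[OF assms(2)]
    by (intro emeasure_eq_AE) (auto elim: eventually_mono)
  then show "survival X t = survival Y t"
    by (simp add: survival_def measure_def)
qed

lemma min_integral_cong_AE:
  assumes "X \<in> borel_measurable M01" "Y \<in> borel_measurable M01" "AE s in M01. X s = Y s"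
  shows "min_integral X = min_integral Y"
  unfolding min_integral_def using assms by (intro ext integral_cong_AE) (auto elim: eventually_mono)

lemma L1_dist_cong_AE:
  assumes "X \<in> borel_measurable M01" "Y \<in> borel_measurable M01"
    "X' \<in> borel_measurable M01" "Y' \<in> borel_measurable M01"
    "AE s in M01. X s = X' s" "AE s in M01. Y s = Y' s"
  shows "L1_dist X Y = L1_dist X' Y'"
  unfolding L1_dist_def using assms by (intro integral_cong_AE) (auto elim: eventually_rev_mp)

lemma survival_greater_right:
  assumes X: "X \<in> borel_measurable M01" and s: "s < survival X t"
  shows "\<exists>t'>t. s < survival X t'"
proof -
  define A where "A n = {x \<in> {0..1}. t + 1 / Suc n < X x}" for n :: nat
  have "range A \<subseteq> sets M01" unfolding A_def using sets_M01_greater[OF X] by auto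
  moreover have "incseq A"
    unfolding incseq_def A_def
  proof (intro allI impI subsetI)
    fix m n :: nat and x assume "m \<le> n" "x \<in> {x \<in> {0..1}. t + 1 / Suc m < X x}"
    moreover have "1 / real (Suc n) \<le> 1 / Suc m" using \<open>m \<le> n\<close> by (simp add: frac_le)
    ultimately show "x \<in> {x \<in> {0..1}. t + 1 / Suc n < X x}" by auto
  qed
  ultimately have lim: "(\<lambda>n. measure M01 (A n)) \<longlonglongrightarrow> measure M01 (\<Union>(range A))"
    by (rule finite_measure.finite_Lim_measure_incseq[OF finite_measure_M01])
  have "\<Union>(range A) = {x \<in> {0..1}. t < X x}"
  proof (intro set_eqI iffI)
    fix x assume "x \<in> \<Union>(range A)"
    then obtain n where "x \<in> A n" by auto
    then show "x \<in> {x \<in> {0..1}. t < X x}" unfolding A_def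
      by (auto intro: less_trans[rotated] simp: less_add_same_cancel1)
  next
    fix x assume x: "x \<in> {x \<in> {0..1}. t < X x}"
    then obtain n where "1 / Suc n < X x - t"
      using reals_Archimedean[of "X x - t"] by (auto simp: inverse_eq_divide)
    then have "x \<in> A n" using x unfolding A_def by auto
    then show "x \<in> \<Union>(range A)" by auto
  qed
  then have "(\<lambda>n. measure M01 (A n)) \<longlonglongrightarrow> survival X t" using lim unfolding survival_def by simp
  then have "\<forall>\<^sub>F n in sequentially. s < measure M01 (A n)" using s by (rule order_tendstoD)
  then obtain n where "s < measure M01 (A n)" by (auto dest: eventually_happens)
  then show ?thesis unfolding A_def survival_def by (intro exI[of _ "t + 1 / Suc n"]) auto
qed

lemma pair_sigma_finite_M01: "pair_sigma_finite M01 M01"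
proof -
  have "sigma_finite_measure M01" using finite_measure_M01 by (simp add: finite_measure_def)
  then show ?thesis by (simp add: pair_sigma_finite_def)
qed

lemma nn_integral_swap_M01:
  fixes f :: "real \<Rightarrow> real \<Rightarrow> ennreal"
  assumes "(\<lambda>(s, t). f s t) \<in> borel_measurable (M01 \<Otimes>\<^sub>M M01)"
  shows "(\<integral>\<^sup>+ t. (\<integral>\<^sup>+ s. f s t \<partial>M01) \<partial>M01) = (\<integral>\<^sup>+ s. (\<integral>\<^sup>+ t. f s t \<partial>M01) \<partial>M01)"
  using pair_sigma_finite.Fubini'[OF pair_sigma_finite_M01, of f] assms by simp

lemma emeasure_M01_le_interval:
  assumes "A \<in> sets M01" "A \<subseteq> {a..b}" "a \<le> b"
  shows "emeasure M01 A \<le> ennreal (b - a)"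
proof -
  have "emeasure M01 A = emeasure lebesgue A" using assms(1) by (simp add: sets_M01 emeasure_M01)
  also have "\<dots> \<le> emeasure lebesgue {a..b}" using assms(1,2) by (intro emeasure_mono) (auto simp: sets_M01)
  also have "\<dots> = ennreal (b - a)" using assms(3) by simp
  finally show ?thesis .
qed

lemma L1_dist_survival_le:
  assumes X: "unit_valued X" and Y: "unit_valued Y"
  shows "L1_dist (survival X) (survival Y) \<le> L1_dist X Y"
proof -
  have Xm[measurable]: "X \<in> borel_measurable M01" and Ym[measurable]: "Y \<in> borel_measurable M01"
    using X Y by (auto simp: unit_valued_def)
  define f :: "real \<Rightarrow> real \<Rightarrow> ennreal" where "f s t = indicator {s. (t < X s) \<noteq> (t < Y s)} s" for s t
  have fm: "(\<lambda>(s, t). f s t) \<in> borel_measurable (M01 \<Otimes>\<^sub>M M01)"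
    unfolding f_def indicator_def by measurable
  have D_sets: "{s \<in> {0..1}. (t < X s) \<noteq> (t < Y s)} \<in> sets M01" for t
  proof -
    have "{s \<in> space M01. (t < X s) \<noteq> (t < Y s)} \<in> sets M01" by measurable
    then show ?thesis by simp
  qed
  have step1: "ennreal \<bar>survival X t - survival Y t\<bar> \<le> (\<integral>\<^sup>+ s. f s t \<partial>M01)" for t
  proof -
    define A where "A = {s \<in> {0..1}. t < X s}"
    define B where "B = {s \<in> {0..1}. t < Y s}"
    define D where "D = {s \<in> {0..1}. (t < X s) \<noteq> (t < Y s)}"
    have sets: "A \<in> sets M01" "B \<in> sets M01" "D \<in> sets M01"
      unfolding A_def B_def D_def using sets_M01_greater[OF Xm] sets_M01_greater[OF Ym] D_sets by auto
    have "measure M01 A \<le> measure M01 (B \<union> D)"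
      using sets by (intro finite_measure.finite_measure_mono[OF finite_measure_M01]) (auto simp: A_def B_def D_def)
    also have "\<dots> \<le> measure M01 B + measure M01 D" using sets by (intro measure_Un_le) auto
    finally have 1: "measure M01 A \<le> measure M01 B + measure M01 D" .
    have "measure M01 B \<le> measure M01 (A \<union> D)"
      using sets by (intro finite_measure.finite_measure_mono[OF finite_measure_M01]) (auto simp: A_def B_def D_def)
    also have "\<dots> \<le> measure M01 A + measure M01 D" using sets by (intro measure_Un_le) auto
    finally have 2: "measure M01 B \<le> measure M01 A + measure M01 D" .
    have "\<bar>survival X t - survival Y t\<bar> \<le> measure M01 D"
      using 1 2 unfolding survival_def A_def B_def by linarith
    then have "ennreal \<bar>survival X t - survival Y t\<bar> \<le> emeasure M01 D"
      by (simp add: finite_measure.emeasure_eq_measure[OF finite_measure_M01])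
    also have "emeasure M01 D = (\<integral>\<^sup>+ s. f s t \<partial>M01)"
      unfolding f_def D_def
      by (subst nn_integral_indicator') (use D_sets in \<open>auto simp: Int_def conj_commute\<close>)
    finally show ?thesis .
  qed
  have step2: "(\<integral>\<^sup>+ t. f s t \<partial>M01) \<le> ennreal \<bar>X s - Y s\<bar>" for s
  proof -
    have Ts: "{t \<in> {0..1}. (t < X s) \<noteq> (t < Y s)} \<in> sets M01"
    proof -
      have "{t \<in> space M01. (t < X s) \<noteq> (t < Y s)} \<in> sets M01" by measurable
      then show ?thesis by simp
    qed
    have "(\<integral>\<^sup>+ t. f s t \<partial>M01) = emeasure M01 {t \<in> {0..1}. (t < X s) \<noteq> (t < Y s)}"
      unfolding f_def
    proof -
      have "(\<lambda>t. indicator {s. (t < X s) \<noteq> (t < Y s)} s :: ennreal) = indicator {t. (t < X s) \<noteq> (t < Y s)}"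
        by (auto simp: indicator_def)
      moreover have "{t. (t < X s) \<noteq> (t < Y s)} \<inter> space M01 = {t \<in> {0..1}. (t < X s) \<noteq> (t < Y s)}" by auto
      ultimately show "(\<integral>\<^sup>+ t. indicator {s. (t < X s) \<noteq> (t < Y s)} s \<partial>M01) = emeasure M01 {t \<in> {0..1}. (t < X s) \<noteq> (t < Y s)}"
        using nn_integral_indicator'[of "{t. (t < X s) \<noteq> (t < Y s)}" M01] Ts by simp
    qed
    also have "\<dots> \<le> ennreal (max (X s) (Y s) - min (X s) (Y s))"
      by (rule emeasure_M01_le_interval[OF Ts]) auto
    also have "max (X s) (Y s) - min (X s) (Y s) = \<bar>X s - Y s\<bar>" by auto
    finally show ?thesis .
  qed
  have int_abs: "integrable M01 (\<lambda>s. \<bar>X s - Y s\<bar>)"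
    by (rule integrable_M01_bounded[where B=1]) (use unit_valued_AE[OF X] unit_valued_AE[OF Y] in \<open>auto elim: eventually_rev_mp\<close>)
  have "(\<integral>\<^sup>+ t. ennreal \<bar>survival X t - survival Y t\<bar> \<partial>M01) \<le> (\<integral>\<^sup>+ t. (\<integral>\<^sup>+ s. f s t \<partial>M01) \<partial>M01)"
    by (intro nn_integral_mono step1)
  also have "\<dots> = (\<integral>\<^sup>+ s. (\<integral>\<^sup>+ t. f s t \<partial>M01) \<partial>M01)" by (rule nn_integral_swap_M01[OF fm])
  also have "\<dots> \<le> (\<integral>\<^sup>+ s. ennreal \<bar>X s - Y s\<bar> \<partial>M01)" by (intro nn_integral_mono step2)
  also have "\<dots> = ennreal (integral\<^sup>L M01 (\<lambda>s. \<bar>X s - Y s\<bar>))"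
    by (rule nn_integral_eq_integral[OF int_abs]) auto
  finally have le: "(\<integral>\<^sup>+ t. ennreal \<bar>survival X t - survival Y t\<bar> \<partial>M01) \<le> ennreal (integral\<^sup>L M01 (\<lambda>s. \<bar>X s - Y s\<bar>))" .
  have GXm: "survival X \<in> borel_measurable M01" "survival Y \<in> borel_measurable M01"
    using unit_valued_survival[OF Xm] unit_valued_survival[OF Ym] by (auto simp: unit_valued_def)
  have "integral\<^sup>L M01 (\<lambda>t. \<bar>survival X t - survival Y t\<bar>) = enn2real (\<integral>\<^sup>+ t. ennreal \<bar>survival X t - survival Y t\<bar> \<partial>M01)"
    by (rule integral_eq_nn_integral) (use GXm in auto)
  also have "\<dots> \<le> integral\<^sup>L M01 (\<lambda>s. \<bar>X s - Y s\<bar>)"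
    by (rule enn2real_leI[OF _ le]) simp
  finally show ?thesis
    unfolding L1_dist_def .
qed

lemma min_integral_eq_integral_survival:
  assumes X: "unit_valued X" and v: "0 \<le> v" "v \<le> 1"
  shows "min_integral X v = integral\<^sup>L M01 (\<lambda>t. indicator {..<v} t * survival X t)"
proof -
  have Xm[measurable]: "X \<in> borel_measurable M01" using X by (auto simp: unit_valued_def)
  define f :: "real \<Rightarrow> real \<Rightarrow> ennreal" where "f s t = indicator {s. t < X s \<and> t < v} s" for s t
  have fm: "(\<lambda>(s, t). f s t) \<in> borel_measurable (M01 \<Otimes>\<^sub>M M01)"
    unfolding f_def indicator_def by measurable
  have inner_s: "(\<integral>\<^sup>+ t. f s t \<partial>M01) = ennreal (min (X s) v)" if s: "0 \<le> X s" "X s \<le> 1" for s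
  proof -
    have Ts: "{t. t < X s \<and> t < v} \<inter> space M01 = {0..<min (X s) v}" using s by auto
    have "(\<lambda>t. f s t) = indicator {t. t < X s \<and> t < v}" unfolding f_def by (auto simp: indicator_def)
    then have "(\<integral>\<^sup>+ t. f s t \<partial>M01) = emeasure M01 ({t. t < X s \<and> t < v} \<inter> space M01)"
      using nn_integral_indicator'[of "{t. t < X s \<and> t < v}" M01] Ts by (simp add: sets_M01)
    also have "\<dots> = ennreal (min (X s) v)" unfolding Ts using s v by (intro emeasure_M01_Ico) auto
    finally show ?thesis .
  qed
  have inner_t: "(\<integral>\<^sup>+ s. f s t \<partial>M01) = ennreal (indicator {..<v} t * survival X t)" for t
  proof (cases "t < v")
    case True
    have "(\<lambda>s. f s t) = indicator {s. t < X s}" unfolding f_def using True by (auto simp: indicator_def)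
    moreover have "{s. t < X s} \<inter> space M01 = {s \<in> {0..1}. t < X s}" by auto
    ultimately have "(\<integral>\<^sup>+ s. f s t \<partial>M01) = emeasure M01 {s \<in> {0..1}. t < X s}"
      using nn_integral_indicator'[of "{s. t < X s}" M01] sets_M01_greater[OF Xm, of t] by simp
    also have "\<dots> = ennreal (survival X t)" unfolding survival_def by (simp add: finite_measure.emeasure_eq_measure[OF finite_measure_M01])
    finally show ?thesis using True by simp
  next
    case False
    then have "(\<lambda>s. f s t) = (\<lambda>s. 0)" unfolding f_def by (auto simp: indicator_def)
    then show ?thesis using False by simp
  qed
  have int1: "integrable M01 (\<lambda>t. indicator {..<v} t * survival X t)"
  proof (rule integrable_M01_bounded[where B=1])
    show "(\<lambda>t. indicator {..<v} t * survival X t) \<in> borel_measurable M01"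
      using survival_measurable[OF Xm] by measurable
    show "AE t in M01. \<bar>indicator {..<v} t * survival X t\<bar> \<le> (1::real)"
      using survival_nonneg[of X] survival_le_1[of X] by (auto simp: indicator_def)
  qed
  have "ennreal (min_integral X v) = (\<integral>\<^sup>+ s. ennreal (min (X s) v) \<partial>M01)"
    unfolding min_integral_def
    by (rule nn_integral_eq_integral[symmetric, OF integrable_min_M01[OF X]]) (use unit_valued_AE[OF X] v in \<open>auto elim: eventually_mono\<close>)
  also have "\<dots> = (\<integral>\<^sup>+ s. (\<integral>\<^sup>+ t. f s t \<partial>M01) \<partial>M01)"
    by (rule nn_integral_cong_AE) (use unit_valued_AE[OF X] inner_s in \<open>auto elim: eventually_mono\<close>)
  also have "\<dots> = (\<integral>\<^sup>+ t. (\<integral>\<^sup>+ s. f s t \<partial>M01) \<partial>M01)" by (rule nn_integral_swap_M01[OF fm, symmetric])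
  also have "\<dots> = (\<integral>\<^sup>+ t. ennreal (indicator {..<v} t * survival X t) \<partial>M01)" by (simp add: inner_t)
  also have "\<dots> = ennreal (integral\<^sup>L M01 (\<lambda>t. indicator {..<v} t * survival X t))"
    by (rule nn_integral_eq_integral[OF int1]) (use survival_nonneg[of X] survival_le_1[of X] in auto)
  finally have eq: "ennreal (min_integral X v) = ennreal (integral\<^sup>L M01 (\<lambda>t. indicator {..<v} t * survival X t))" .
  have "0 \<le> min_integral X v" unfolding min_integral_def
    by (rule integral_nonneg_AE) (use unit_valued_AE[OF X] v in \<open>auto elim: eventually_mono\<close>)
  moreover have "0 \<le> integral\<^sup>L M01 (\<lambda>t. indicator {..<v} t * survival X t)"
    by (rule integral_nonneg_AE) (use survival_nonneg[of X] survival_le_1[of X] in auto)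
  ultimately show ?thesis using eq by simp
qed

lemma min_integral_dist_le_L1_dist:
  assumes X: "unit_valued X" and Y: "unit_valued Y"
  shows "\<bar>min_integral X v - min_integral Y v\<bar> \<le> L1_dist X Y"
proof -
  have int_abs: "integrable M01 (\<lambda>s. \<bar>X s - Y s\<bar>)"
    by (rule integrable_M01_bounded[where B=1]) (use unit_valued_AE[OF X] unit_valued_AE[OF Y] unit_valued_measurable[OF X] unit_valued_measurable[OF Y] in \<open>auto elim: eventually_rev_mp\<close>)
  have "min_integral X v - min_integral Y v = integral\<^sup>L M01 (\<lambda>s. min (X s) v - min (Y s) v)"
    unfolding min_integral_def by (subst Bochner_Integration.integral_diff) (auto intro: integrable_min_M01 X Y)
  also have "\<bar>\<dots>\<bar> \<le> integral\<^sup>L M01 (\<lambda>s. \<bar>X s - Y s\<bar>)"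
  proof (rule integral_abs_bound_integral)
    show "integrable M01 (\<lambda>s. min (X s) v - min (Y s) v)"
      by (intro Bochner_Integration.integrable_diff integrable_min_M01 X Y)
  qed (auto intro: int_abs)
  finally show ?thesis
    unfolding L1_dist_def .
qed

lemma min_integral_dist_le_L1_dist_survival:
  assumes X: "unit_valued X" and Y: "unit_valued Y" and v: "0 \<le> v" "v \<le> 1"
  shows "\<bar>min_integral X v - min_integral Y v\<bar> \<le> L1_dist (survival X) (survival Y)"
proof -
  have gx: "unit_valued (survival X)" "unit_valued (survival Y)" using unit_valued_survival unit_valued_measurable X Y by auto
  have ii: "integrable M01 (\<lambda>t. indicator {..<v} t * survival Z t)" if "unit_valued Z" for Z
  proof (rule integrable_M01_bounded[where B=1])
    show "(\<lambda>t. indicator {..<v} t * survival Z t) \<in> borel_measurable M01"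
      using survival_measurable[OF unit_valued_measurable[OF that]] by measurable
  qed (use survival_nonneg[of Z] survival_le_1[of Z] in \<open>auto simp: indicator_def\<close>)
  have b1: "\<bar>survival X t - survival Y t\<bar> \<le> 1" for t using survival_nonneg[of X t] survival_le_1[of X t] survival_nonneg[of Y t] survival_le_1[of Y t] by auto
  have int_abs: "integrable M01 (\<lambda>t. \<bar>survival X t - survival Y t\<bar>)"
    by (rule integrable_M01_bounded[where B=1]) (use b1 unit_valued_measurable[OF gx(1)] unit_valued_measurable[OF gx(2)] in auto)
  have "min_integral X v - min_integral Y v = integral\<^sup>L M01 (\<lambda>t. indicator {..<v} t * survival X t - indicator {..<v} t * survival Y t)"
    unfolding min_integral_eq_integral_survival[OF X v] min_integral_eq_integral_survival[OF Y v] by (subst Bochner_Integration.integral_diff) (auto intro: ii X Y)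
  also have "\<bar>\<dots>\<bar> \<le> integral\<^sup>L M01 (\<lambda>t. \<bar>survival X t - survival Y t\<bar>)"
  proof (rule integral_abs_bound_integral)
    show "integrable M01 (\<lambda>t. indicator {..<v} t * survival X t - indicator {..<v} t * survival Y t)"
      by (intro Bochner_Integration.integrable_diff ii X Y)
  qed (auto intro: int_abs simp: indicator_def)
  finally show ?thesis
    unfolding L1_dist_def .
qed

lemma survival_survival_eq:
  fixes Y :: "real \<Rightarrow> real"
  assumes anti: "antimono Y" and b: "\<And>t. 0 \<le> Y t \<and> Y t \<le> 1"
    and rc: "\<And>t s. s < Y t \<Longrightarrow> \<exists>t'>t. s < Y t'" and t: "0 \<le> t" "t < 1"
  shows "survival (survival Y) t = Y t"
proof -
  have Ym: "Y \<in> borel_measurable M01"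
    by (rule borel_measurable_M01[OF borel_measurable_antimono[OF anti]])
  have claim: "t < survival Y s \<longleftrightarrow> s < Y t" for s
  proof
    assume st: "s < Y t"
    obtain t' where t': "t' > t" "s < Y t'" using rc[OF st] by blast
    define t'' where "t'' = min t' 1"
    have "t < t''" using t t' unfolding t''_def by auto
    have "Y t' \<le> Y t''" using antimonoD[OF anti, of t'' t'] unfolding t''_def by auto
    have sub: "{0..t''} \<subseteq> {x \<in> {0..1}. s < Y x}"
    proof
      fix x assume "x \<in> {0..t''}"
      then have "Y t'' \<le> Y x" "x \<in> {0..1}" using antimonoD[OF anti, of x t''] unfolding t''_def by auto
      then show "x \<in> {x \<in> {0..1}. s < Y x}" using \<open>Y t' \<le> Y t''\<close> t' by auto
    qed
    have "t'' = measure M01 {0..t''}" using \<open>t < t''\<close> t unfolding t''_def by (subst measure_M01) auto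
    also have "\<dots> \<le> survival Y s" unfolding survival_def
      by (intro finite_measure.finite_measure_mono[OF finite_measure_M01] sub sets_M01_greater[OF Ym])
    finally show "t < survival Y s" using \<open>t < t''\<close> by simp
  next
    assume ts: "t < survival Y s"
    show "s < Y t"
    proof (rule ccontr)
      assume "\<not> s < Y t"
      have sub: "{x \<in> {0..1}. s < Y x} \<subseteq> {0..<t}"
      proof
        fix x assume x: "x \<in> {x \<in> {0..1}. s < Y x}"
        have "x < t"
        proof (rule ccontr)
          assume "\<not> x < t"
          then have "Y x \<le> Y t" using antimonoD[OF anti, of t x] by simp
          then show False using x \<open>\<not> s < Y t\<close> by simp
        qed
        then show "x \<in> {0..<t}" using x by auto
      qed
      have "survival Y s \<le> measure M01 {0..<t}" unfolding survival_def
        by (intro finite_measure.finite_measure_mono[OF finite_measure_M01] sub) (use t in \<open>auto simp: sets_M01\<close>)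
      also have "\<dots> = t" using t by (subst measure_M01_Ico) auto
      finally show False using ts by simp
    qed
  qed
  have "survival (survival Y) t = measure M01 {s \<in> {0..1}. s < Y t}" unfolding survival_def[of "survival Y"] using claim by simp
  also have "{s \<in> {0..1}. s < Y t} = {0..<Y t}" using b[of t] by auto
  also have "measure M01 {0..<Y t} = Y t" using b[of t] by (subst measure_M01_Ico) auto
  finally show ?thesis .
qed

lemma survival_survival_survival_AE:
  assumes X: "X \<in> borel_measurable M01"
  shows "AE t in M01. survival (survival (survival X)) t = survival X t"
  using AE_M01_interior
proof eventually_elim
  case (elim t)
  show ?case
    by (rule survival_survival_eq[OF antimono_survival[OF X]])
      (use elim survival_nonneg survival_le_1 survival_greater_right[OF X] in auto)
qed

lemma L1_dist_nonneg: "0 \<le> L1_dist X Y"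
  unfolding L1_dist_def by (rule integral_nonneg_AE) simp

lemma tendsto_L1_dist_survival_iff_survival_survival:
  assumes Xs: "\<And>n. unit_valued (Xs n)" and X: "unit_valued X"
  shows "(\<lambda>n. L1_dist (survival (Xs n)) (survival X)) \<longlonglongrightarrow> 0 \<longleftrightarrow>
    (\<lambda>n. L1_dist (survival (survival (Xs n))) (survival (survival X))) \<longlonglongrightarrow> 0"
proof
  assume lim: "(\<lambda>n. L1_dist (survival (Xs n)) (survival X)) \<longlonglongrightarrow> 0"
  have le: "L1_dist (survival (survival (Xs n))) (survival (survival X)) \<le> L1_dist (survival (Xs n)) (survival X)" for n
    using Xs X by (intro L1_dist_survival_le unit_valued_survival unit_valued_measurable)
  show "(\<lambda>n. L1_dist (survival (survival (Xs n))) (survival (survival X))) \<longlonglongrightarrow> 0"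
    using le by (intro Lim_null_comparison[OF always_eventually lim]) (simp add: L1_dist_nonneg)
next
  assume lim: "(\<lambda>n. L1_dist (survival (survival (Xs n))) (survival (survival X))) \<longlonglongrightarrow> 0"
  have le: "L1_dist (survival (Xs n)) (survival X) \<le> L1_dist (survival (survival (Xs n))) (survival (survival X))" for n
  proof -
    have meas: "survival Z \<in> borel_measurable M01" "survival (survival (survival Z)) \<in> borel_measurable M01"
      if "Z \<in> borel_measurable M01" for Z
      using that by (intro survival_measurable that)+
    have "L1_dist (survival (Xs n)) (survival X)
        = L1_dist (survival (survival (survival (Xs n)))) (survival (survival (survival X)))"
      using survival_survival_survival_AE[OF unit_valued_measurable[OF Xs[of n]]]
        survival_survival_survival_AE[OF unit_valued_measurable[OF X]]
      by (intro L1_dist_cong_AE meas unit_valued_measurable Xs X) (auto elim: eventually_mono)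
    also have "\<dots> \<le> L1_dist (survival (survival (Xs n))) (survival (survival X))"
      using Xs X by (intro L1_dist_survival_le unit_valued_survival survival_measurable unit_valued_measurable)
    finally show ?thesis .
  qed
  show "(\<lambda>n. L1_dist (survival (Xs n)) (survival X)) \<longlonglongrightarrow> 0"
    using le by (intro Lim_null_comparison[OF always_eventually lim]) (simp add: L1_dist_nonneg)
qed

lemma survival_tendsto_at_isCont:
  assumes Xs: "\<And>n. unit_valued (Xs n)" and X: "unit_valued X"
    and conv: "\<And>v. v \<in> {0..1} \<Longrightarrow> (\<lambda>n. min_integral (Xs n) v) \<longlonglongrightarrow> min_integral X v"
    and t: "0 < t" "t < 1" and cont: "isCont (survival X) t"
  shows "(\<lambda>n. survival (Xs n) t) \<longlonglongrightarrow> survival X t"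
proof -
  have near: "\<exists>h>0. h \<le> b \<and> \<bar>survival X (t + s * h) - survival X t\<bar> < e"
    if "0 < b" "0 < e" "\<bar>s\<bar> = 1" for b e s
  proof -
    obtain \<delta> where "0 < \<delta>" and \<delta>: "\<And>x. \<bar>x - t\<bar> < \<delta> \<Longrightarrow> \<bar>survival X x - survival X t\<bar> < e"
      using cont \<open>0 < e\<close> unfolding continuous_at_eps_delta dist_real_def by metis
    show ?thesis
      using \<open>0 < b\<close> \<open>0 < \<delta>\<close> \<open>\<bar>s\<bar> = 1\<close> by (intro exI[of _ "min (\<delta> / 2) b"] conjI \<delta>) (auto simp: abs_mult)
  qed
  show ?thesis
  proof (rule order_tendstoI)
    fix y assume "survival X t < y"
    then obtain h where h: "0 < h" "h \<le> t" "survival X (t - h) < y"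
      using near[of t "y - survival X t" "-1"] t by auto
    have "min_integral X t - min_integral X (t - h) < h * y"
      using min_integral_diff_bounds(2)[OF X, of "t - h" t] h by (smt (verit) mult_strict_left_mono)
    moreover have "(\<lambda>n. min_integral (Xs n) t - min_integral (Xs n) (t - h)) \<longlonglongrightarrow> min_integral X t - min_integral X (t - h)"
      using t h by (intro tendsto_diff conv) auto
    ultimately have "\<forall>\<^sub>F n in sequentially. min_integral (Xs n) t - min_integral (Xs n) (t - h) < h * y"
      by (simp add: order_tendstoD(2))
    then show "\<forall>\<^sub>F n in sequentially. survival (Xs n) t < y"
    proof (rule eventually_mono)
      fix n assume "min_integral (Xs n) t - min_integral (Xs n) (t - h) < h * y"
      moreover have "h * survival (Xs n) t \<le> min_integral (Xs n) t - min_integral (Xs n) (t - h)"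
        using min_integral_diff_bounds(1)[OF Xs[of n], of "t - h" t] h by simp
      ultimately have "h * survival (Xs n) t < h * y"
        by linarith
      then show "survival (Xs n) t < y"
        using \<open>0 < h\<close> by simp
    qed
  next
    fix y assume "y < survival X t"
    then obtain h where h: "0 < h" "h \<le> 1 - t" "y < survival X (t + h)"
      using near[of "1 - t" "survival X t - y" 1] t by auto
    have "h * y < min_integral X (t + h) - min_integral X t"
      using min_integral_diff_bounds(1)[OF X, of t "t + h"] h by (smt (verit) mult_strict_left_mono)
    moreover have "(\<lambda>n. min_integral (Xs n) (t + h) - min_integral (Xs n) t) \<longlonglongrightarrow> min_integral X (t + h) - min_integral X t"
      using t h by (intro tendsto_diff conv) auto
    ultimately have "\<forall>\<^sub>F n in sequentially. h * y < min_integral (Xs n) (t + h) - min_integral (Xs n) t"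
      by (simp add: order_tendstoD(1))
    then show "\<forall>\<^sub>F n in sequentially. y < survival (Xs n) t"
    proof (rule eventually_mono)
      fix n assume "h * y < min_integral (Xs n) (t + h) - min_integral (Xs n) t"
      moreover have "min_integral (Xs n) (t + h) - min_integral (Xs n) t \<le> h * survival (Xs n) t"
        using min_integral_diff_bounds(2)[OF Xs[of n], of t "t + h"] h by simp
      ultimately have "h * y < h * survival (Xs n) t"
        by linarith
      then show "y < survival (Xs n) t"
        using \<open>0 < h\<close> by simp
    qed
  qed
qed

lemma tendsto_L1_dist_survival_iff_min_integral:
  assumes Xs: "\<And>n. unit_valued (Xs n)" and X: "unit_valued X"
  shows "(\<lambda>n. L1_dist (survival (Xs n)) (survival X)) \<longlonglongrightarrow> 0 \<longleftrightarrow>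
    (\<forall>v\<in>{0..1}. (\<lambda>n. min_integral (Xs n) v) \<longlonglongrightarrow> min_integral X v)"
proof
  assume lim: "(\<lambda>n. L1_dist (survival (Xs n)) (survival X)) \<longlonglongrightarrow> 0"
  show "\<forall>v\<in>{0..1}. (\<lambda>n. min_integral (Xs n) v) \<longlonglongrightarrow> min_integral X v"
  proof
    fix v :: real assume "v \<in> {0..1}"
    then have "((\<lambda>n. min_integral (Xs n) v - min_integral X v) \<longlonglongrightarrow> 0)"
      using min_integral_dist_le_L1_dist_survival[OF Xs X]
      by (intro Lim_null_comparison[OF always_eventually lim]) simp
    then show "(\<lambda>n. min_integral (Xs n) v) \<longlonglongrightarrow> min_integral X v"
      by (simp add: LIM_zero_iff)
  qed
next
  assume conv: "\<forall>v\<in>{0..1}. (\<lambda>n. min_integral (Xs n) v) \<longlonglongrightarrow> min_integral X v"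
  have X_meas: "survival X \<in> borel_measurable M01" and Xs_meas: "\<And>n. survival (Xs n) \<in> borel_measurable M01"
    using X Xs by (simp_all add: survival_measurable unit_valued_measurable)
  have "AE t in M01. (\<lambda>n. survival (Xs n) t) \<longlonglongrightarrow> survival X t"
    using AE_M01_interior AE_M01_not_in_countable[OF antimono_ctble_discont[OF antimono_survival[OF unit_valued_measurable[OF X]]]]
    by eventually_elim (use survival_tendsto_at_isCont[OF Xs X] conv in auto)
  then have "AE t in M01. (\<lambda>n. \<bar>survival (Xs n) t - survival X t\<bar>) \<longlonglongrightarrow> 0"
    by eventually_elim (simp add: tendsto_rabs_zero LIM_zero)
  then have "(\<lambda>n. integral\<^sup>L M01 (\<lambda>t. \<bar>survival (Xs n) t - survival X t\<bar>)) \<longlonglongrightarrow> integral\<^sup>L M01 (\<lambda>t. 0)"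
  proof (rule integral_dominated_convergence[where w="\<lambda>t. 1", rotated 3])
    show "integrable M01 (\<lambda>t. 1 :: real)"
      using finite_measure.integrable_const[OF finite_measure_M01] .
    show "AE t in M01. norm \<bar>survival (Xs n) t - survival X t\<bar> \<le> 1" for n
    proof (rule AE_I2)
      fix t
      show "norm \<bar>survival (Xs n) t - survival X t\<bar> \<le> 1"
        using survival_nonneg[of "Xs n" t] survival_nonneg[of X t] survival_le_1[of "Xs n" t] survival_le_1[of X t]
        by simp
    qed
  qed (use X_meas Xs_meas in auto)
  then show "(\<lambda>n. L1_dist (survival (Xs n)) (survival X)) \<longlonglongrightarrow> 0"
    by (simp add: L1_dist_def)
qed

definition clamp01 :: "real \<Rightarrow> real" where
  "clamp01 t = max 0 (min 1 t)"

lemma clamp01_mem: "clamp01 t \<in> {0..1}"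
  by (simp add: clamp01_def)

lemma clamp01_id: "t \<in> {0..1} \<Longrightarrow> clamp01 t = t"
  by (simp add: clamp01_def)

lemma mono_lipschitz_clamp01:
  fixes f :: "real \<Rightarrow> real"
  assumes mono: "mono_on {0..1} f" and lip: "1-lipschitz_on {0..1} f"
  shows "mono (\<lambda>t. f (clamp01 t))" and "\<bar>f (clamp01 x) - f (clamp01 y)\<bar> \<le> \<bar>x - y\<bar>"
proof -
  show "mono (\<lambda>t. f (clamp01 t))"
    using clamp01_mem by (intro monoI mono_onD[OF mono]) (auto simp: clamp01_def)
  have "\<bar>f (clamp01 x) - f (clamp01 y)\<bar> \<le> \<bar>clamp01 x - clamp01 y\<bar>"
    using lipschitz_onD[OF lip clamp01_mem clamp01_mem] by (simp add: dist_real_def)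
  also have "\<dots> \<le> \<bar>x - y\<bar>"
    by (auto simp: clamp01_def max_def min_def abs_if)
  finally show "\<bar>f (clamp01 x) - f (clamp01 y)\<bar> \<le> \<bar>x - y\<bar>" .
qed

lemma tendsto_slope_sequence:
  fixes g :: "real \<Rightarrow> real"
  assumes "(g has_real_derivative D) (at t)"
  shows "(\<lambda>n. (g (t + 1 / Suc n) - g t) * Suc n) \<longlonglongrightarrow> D"
proof -
  have lim: "((\<lambda>h. (g (t + h) - g t) / h) \<longlongrightarrow> D) (at 0)"
    using assms unfolding DERIV_def .
  have "(\<lambda>n. 1 / real (Suc n)) \<longlonglongrightarrow> 0"
    by (rule LIMSEQ_Suc[OF lim_inverse_n'])
  then have "filterlim (\<lambda>n. 1 / real (Suc n)) (at 0) sequentially"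
    by (simp add: filterlim_at)
  from filterlim_compose[OF lim this] show ?thesis
    by (simp add: field_simps)
qed

definition diff_quot01 :: "(real \<Rightarrow> real) \<Rightarrow> nat \<Rightarrow> real \<Rightarrow> real" where
  "diff_quot01 f n t = (f (clamp01 (t + 1 / Suc n)) - f (clamp01 t)) * real (Suc n)"

lemma diff_quot01_bounds:
  fixes f :: "real \<Rightarrow> real"
  assumes mono: "mono_on {0..1} f" and lip: "1-lipschitz_on {0..1} f"
  shows "0 \<le> diff_quot01 f n t" and "diff_quot01 f n t \<le> 1"
proof -
  define d where "d = 1 / real (Suc n)"
  have incr: "0 \<le> f (clamp01 (t + d)) - f (clamp01 t)" "f (clamp01 (t + d)) - f (clamp01 t) \<le> d"
    using monoD[OF mono_lipschitz_clamp01(1)[OF mono lip], of t "t + d"]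
      mono_lipschitz_clamp01(2)[OF mono lip, of "t + d" t] by (auto simp: d_def)
  then show "0 \<le> diff_quot01 f n t"
    by (simp add: diff_quot01_def d_def)
  have "diff_quot01 f n t \<le> d * real (Suc n)"
    using incr unfolding diff_quot01_def d_def by (intro mult_right_mono) auto
  then show "diff_quot01 f n t \<le> 1"
    by (simp add: d_def)
qed

lemma borel_measurable_diff_quot01:
  fixes f :: "real \<Rightarrow> real"
  assumes mono: "mono_on {0..1} f" and lip: "1-lipschitz_on {0..1} f"
  shows "diff_quot01 f n \<in> borel_measurable M01"
proof -
  define g where "g t = f (clamp01 t)" for t
  have g: "continuous_on UNIV g"
    using mono_lipschitz_clamp01(2)[OF mono lip] unfolding g_def
    by (intro lipschitz_on_continuous_on[of 1] lipschitz_onI) (auto simp: dist_real_def)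
  have "continuous_on UNIV (\<lambda>t. g (t + 1 / Suc n))"
    by (rule continuous_on_compose2[OF g]) (auto intro: continuous_intros)
  then have "continuous_on UNIV (diff_quot01 f n)"
    unfolding diff_quot01_def g_def[symmetric] by (intro continuous_on_mult_right continuous_on_diff g)
  then show ?thesis
    by (intro borel_measurable_M01 borel_measurable_continuous_onI)
qed

lemma AE_differentiable_M01:
  fixes f :: "real \<Rightarrow> real"
  assumes mono: "mono_on {0..1} f" and lip: "1-lipschitz_on {0..1} f"
  shows "AE t in M01. f differentiable (at t)"
proof -
  let ?g = "\<lambda>t. f (clamp01 t)"
  have "AE t in lebesgue. ?g differentiable (at t)"
    using mono_lipschitz_clamp01[OF mono lip] by (intro mono_lipschitz_differentiable_ae)
  then have "AE t in M01. ?g differentiable (at t)"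
    by (subst AE_restrict_space_iff) (auto elim: eventually_mono)
  with AE_M01_interior show ?thesis
  proof eventually_elim
    case (elim t)
    then obtain D where "(?g has_real_derivative D) (at t)"
      by (auto simp: real_differentiable_def)
    then have "(f has_real_derivative D) (at t)"
      by (rule has_field_derivative_transform_within_open[of _ _ _ "{0<..<1}"]) (use elim in \<open>auto simp: clamp01_id\<close>)
    then show ?case
      by (auto simp: real_differentiable_def)
  qed
qed

lemma AE_tendsto_diff_quot01:
  fixes f :: "real \<Rightarrow> real"
  assumes mono: "mono_on {0..1} f" and lip: "1-lipschitz_on {0..1} f"
  shows "AE t in M01. (\<lambda>n. diff_quot01 f n t) \<longlonglongrightarrow> deriv0 f t"
  using AE_differentiable_M01[OF mono lip] AE_M01_interior
proof eventually_elim
  case (elim t)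
  then have "(f has_real_derivative deriv0 f t) (at t)"
    by (simp add: deriv0_def DERIV_deriv_iff_real_differentiable)
  then have "((\<lambda>t. f (clamp01 t)) has_real_derivative deriv0 f t) (at t)"
    by (rule has_field_derivative_transform_within_open[of _ _ _ "{0<..<1}"]) (use elim in \<open>auto simp: clamp01_id\<close>)
  then show ?case
    unfolding diff_quot01_def by (rule tendsto_slope_sequence)
qed

lemma unit_valued_deriv0:
  fixes f :: "real \<Rightarrow> real"
  assumes mono: "mono_on {0..1} f" and lip: "1-lipschitz_on {0..1} f"
  shows "unit_valued (deriv0 f)"
proof -
  note lim = AE_tendsto_diff_quot01[OF mono lip]
  have "(\<lambda>t. lim (\<lambda>n. diff_quot01 f n t)) \<in> borel_measurable M01"
    by (rule borel_measurable_lim_metric) (rule borel_measurable_diff_quot01[OF mono lip])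
  then have "deriv0 f \<in> borel_measurable M01"
    by (rule borel_measurable_M01_AE) (use lim in \<open>auto elim: eventually_mono intro: limI\<close>)
  moreover have "AE t in M01. 0 \<le> deriv0 f t \<and> deriv0 f t \<le> 1"
    using lim
  proof eventually_elim
    case (elim t)
    show ?case
      using tendsto_lowerbound[OF elim, of 0] tendsto_upperbound[OF elim, of 1]
        diff_quot01_bounds[OF mono lip] by simp
  qed
  ultimately show ?thesis
    by (simp add: unit_valued_def)
qed

lemma integral_shift_diff_le:
  fixes G :: "real \<Rightarrow> real"
  assumes mono: "mono G" and cont: "continuous_on UNIV G"
    and const: "\<And>t. 1 \<le> t \<Longrightarrow> G t = G 1" and d: "0 \<le> d" "d \<le> 1"
  shows "integral {0..1} (\<lambda>t. G (t + d)) - integral {0..1} G \<le> d * (G 1 - G 0)"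
proof -
  have int: "G integrable_on {a..b}" for a b
    using cont by (intro integrable_continuous_real) (auto intro: continuous_on_subset)
  have "integral {0..1} (\<lambda>t. G (t + d)) = integral {d..1 + d} G"
    using integral_shift_Icc_real[of 0 1 G d] by (simp add: o_def add.commute)
  also have "\<dots> = integral {d..1} G + integral {1..1 + d} G"
    using Henstock_Kurzweil_Integration.integral_combine[where a=d and c=1 and b="1 + d" and f=G] int d by simp
  also have "integral {1..1 + d} G = integral {1..1 + d} (\<lambda>_. G 1)"
    by (rule integral_cong) (rule const; simp)
  also have "\<dots> = d * G 1"
    using d by simp
  finally have shifted: "integral {0..1} (\<lambda>t. G (t + d)) = integral {d..1} G + d * G 1" .
  have "d * G 0 = integral {0..d} (\<lambda>_. G 0)"
    using d by simp
  also have "\<dots> \<le> integral {0..d} G"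
    using int mono by (intro integral_le) (auto simp: mono_def)
  finally have "d * G 0 + integral {d..1} G \<le> integral {0..1} G"
    using Henstock_Kurzweil_Integration.integral_combine[where a=0 and c=d and b=1 and f=G] int d by simp
  with shifted show ?thesis
    by (simp add: algebra_simps)
qed

lemma integral_diff_quot01_le:
  fixes f :: "real \<Rightarrow> real"
  assumes mono: "mono_on {0..1} f" and lip: "1-lipschitz_on {0..1} f"
  shows "integral\<^sup>L M01 (diff_quot01 f n) \<le> f 1 - f 0"
proof -
  define G where "G t = f (clamp01 t)" for t
  define d where "d = 1 / real (Suc n)"
  have cont: "continuous_on UNIV G"
    using mono_lipschitz_clamp01(2)[OF mono lip] unfolding G_def
    by (intro lipschitz_on_continuous_on[of 1] lipschitz_onI) (auto simp: dist_real_def)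
  have G01: "G 0 = f 0" "G 1 = f 1"
    by (simp_all add: G_def clamp01_id)
  have "integral\<^sup>L M01 (diff_quot01 f n) = integral {0..1} (diff_quot01 f n)"
    using diff_quot01_bounds[OF mono lip]
    by (intro lebesgue_integral_eq_integral integrable_M01_bounded[where B=1] borel_measurable_diff_quot01[OF mono lip]) auto
  also have "\<dots> = (integral {0..1} (\<lambda>t. G (t + d)) - integral {0..1} G) * real (Suc n)"
  proof -
    have "continuous_on UNIV (\<lambda>t. G (t + d))"
      by (rule continuous_on_compose2[OF cont]) (auto intro: continuous_intros)
    then have "(\<lambda>t. G (t + d)) integrable_on {0..1}" "G integrable_on {0..1}"
      using cont by (auto intro: integrable_continuous_real continuous_on_subset)
    moreover have "diff_quot01 f n = (\<lambda>t. (G (t + d) - G t) * real (Suc n))"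
      by (simp add: fun_eq_iff diff_quot01_def G_def d_def)
    ultimately show ?thesis
      by (simp add: integral_diff)
  qed
  also have "\<dots> \<le> (d * (G 1 - G 0)) * real (Suc n)"
  proof (rule mult_right_mono[OF integral_shift_diff_le[OF _ cont]])
    show "mono G"
      using mono_lipschitz_clamp01(1)[OF mono lip] unfolding G_def .
    show "G t = G 1" if "1 \<le> t" for t
      using that by (simp add: G_def clamp01_def)
  qed (simp_all add: d_def)
  also have "\<dots> = f 1 - f 0"
    by (simp add: d_def G01)
  finally show ?thesis .
qed

lemma integral_deriv0_le:
  fixes f :: "real \<Rightarrow> real"
  assumes mono: "mono_on {0..1} f" and lip: "1-lipschitz_on {0..1} f"
  shows "integral\<^sup>L M01 (deriv0 f) \<le> f 1 - f 0"
proof -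
  have "(\<lambda>n. integral\<^sup>L M01 (diff_quot01 f n)) \<longlonglongrightarrow> integral\<^sup>L M01 (deriv0 f)"
  proof (rule integral_dominated_convergence[where w="\<lambda>_. 1"])
    show "integrable M01 (\<lambda>_. 1 :: real)"
      using finite_measure.integrable_const[OF finite_measure_M01] .
    show "AE t in M01. norm (diff_quot01 f n t) \<le> 1" for n
      using diff_quot01_bounds[OF mono lip] by (intro AE_I2) simp
  qed (use AE_tendsto_diff_quot01[OF mono lip] borel_measurable_diff_quot01[OF mono lip]
      unit_valued_measurable[OF unit_valued_deriv0[OF mono lip]] in auto)
  then show ?thesis
    by (rule tendsto_upperbound) (use integral_diff_quot01_le[OF mono lip] in auto)
qed

lemma L1_dist_deriv0_le:
  fixes f g :: "real \<Rightarrow> real"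
  assumes f: "mono_on {0..1} f" "1-lipschitz_on {0..1} f"
    and g: "mono_on {0..1} g" "1-lipschitz_on {0..1} g"
    and gf: "mono_on {0..1} (\<lambda>t. g t - f t)" "1-lipschitz_on {0..1} (\<lambda>t. g t - f t)"
  shows "L1_dist (deriv0 g) (deriv0 f) \<le> (g 1 - f 1) - (g 0 - f 0)"
proof -
  have "AE t in M01. \<bar>deriv0 g t - deriv0 f t\<bar> = deriv0 (\<lambda>t. g t - f t) t"
    using AE_differentiable_M01[OF f] AE_differentiable_M01[OF g] unit_valued_AE[OF unit_valued_deriv0[OF gf]]
  proof eventually_elim
    case (elim t)
    then have "((\<lambda>t. g t - f t) has_real_derivative deriv0 g t - deriv0 f t) (at t)"
      by (intro DERIV_diff) (simp_all add: deriv0_def DERIV_deriv_iff_real_differentiable)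
    then show ?case
      using elim(3) by (simp add: deriv0_eqI)
  qed
  then have "L1_dist (deriv0 g) (deriv0 f) = integral\<^sup>L M01 (deriv0 (\<lambda>t. g t - f t))"
    unfolding L1_dist_def using unit_valued_measurable[OF unit_valued_deriv0[OF f]]
      unit_valued_measurable[OF unit_valued_deriv0[OF g]] unit_valued_measurable[OF unit_valued_deriv0[OF gf]]
    by (intro integral_cong_AE) auto
  also have "\<dots> \<le> (g 1 - f 1) - (g 0 - f 0)"
    by (rule integral_deriv0_le[OF gf])
  finally show ?thesis .
qed

lemma copula_rectangle_nonneg:
  assumes "copula C" "0 \<le> u1" "u1 \<le> u2" "u2 \<le> 1" "0 \<le> v1" "v1 \<le> v2" "v2 \<le> 1"
  shows "0 \<le> C u2 v2 - C u1 v2 - C u2 v1 + C u1 v1"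
  using assms unfolding copula_def by blast

lemma copula_boundary:
  assumes "copula C" "u \<in> {0..1}"
  shows "C u 0 = 0" "C 0 u = 0" "C u 1 = u" "C 1 u = u"
  using assms unfolding copula_def by auto

lemma copula_section_increment:
  assumes C: "copula C" and u: "0 \<le> u" "u \<le> u'" "u' \<le> 1" and t: "0 \<le> t" "t \<le> t'" "t' \<le> 1"
  shows "0 \<le> C u t' - C u t" and "C u t' - C u t \<le> C u' t' - C u' t" and "C u' t' - C u' t \<le> t' - t"
proof -
  show "C u t' - C u t \<le> C u' t' - C u' t"
    using copula_rectangle_nonneg[OF C, of u u' t t'] u t by simp
  show "0 \<le> C u t' - C u t"
    using copula_rectangle_nonneg[OF C, of 0 u t t'] copula_boundary[OF C, of t] copula_boundary[OF C, of t']
      u t by simp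
  show "C u' t' - C u' t \<le> t' - t"
    using copula_rectangle_nonneg[OF C, of u' 1 t t'] copula_boundary[OF C, of t] copula_boundary[OF C, of t']
      u t by simp
qed

lemma copula_section_mono_lipschitz:
  assumes C: "copula C" and u: "u \<in> {0..1}"
  shows "mono_on {0..1} (C u)" and "1-lipschitz_on {0..1} (C u)"
  using copula_section_increment[OF C _ order.refl] u
  by (auto intro!: mono_onI lipschitz_on_leI simp: dist_real_def)

lemma copula_section_diff_mono_lipschitz:
  assumes C: "copula C" and u: "0 \<le> u" "u \<le> u'" "u' \<le> 1"
  shows "mono_on {0..1} (\<lambda>t. C u' t - C u t)" and "1-lipschitz_on {0..1} (\<lambda>t. C u' t - C u t)"
proof -
  have incr: "0 \<le> (C u' t' - C u t') - (C u' t - C u t)" "(C u' t' - C u t') - (C u' t - C u t) \<le> t' - t"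
    if "0 \<le> t" "t \<le> t'" "t' \<le> 1" for t t'
    using copula_section_increment[OF C u that] by simp_all
  show "mono_on {0..1} (\<lambda>t. C u' t - C u t)"
    by (intro mono_onI) (use incr(1) in force)
  show "1-lipschitz_on {0..1} (\<lambda>t. C u' t - C u t)"
    by (intro lipschitz_on_leI) (use incr in \<open>force simp: dist_real_def\<close>)+
qed

lemma partial2_eq_deriv0: "partial2 D u = deriv0 (D u)"
  by (simp add: partial2_def deriv0_def fun_eq_iff)

lemma unit_valued_partial2: "copula C \<Longrightarrow> u \<in> {0..1} \<Longrightarrow> unit_valued (partial2 C u)"
  unfolding partial2_eq_deriv0 by (intro unit_valued_deriv0 copula_section_mono_lipschitz)

lemma L1_dist_partial2_le:
  assumes C: "copula C" and u: "u \<in> {0..1}" "u' \<in> {0..1}"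
  shows "L1_dist (partial2 C u) (partial2 C u') \<le> \<bar>u - u'\<bar>"
proof -
  have "L1_dist (partial2 C b) (partial2 C a) \<le> b - a" if "0 \<le> a" "a \<le> b" "b \<le> 1" for a b
    using L1_dist_deriv0_le[OF copula_section_mono_lipschitz[OF C] copula_section_mono_lipschitz[OF C]
        copula_section_diff_mono_lipschitz[OF C that]] that
    by (simp add: partial2_eq_deriv0 copula_boundary[OF C])
  moreover have "L1_dist X Y = L1_dist Y X" for X Y
    by (simp add: L1_dist_def abs_minus_commute)
  ultimately show ?thesis
    using u by (cases "u \<le> u'") force+
qed

lemma partial2_Pi_cop: "partial2 Pi_cop s t = s"
  unfolding partial2_eq_deriv0 Pi_cop_def
  by (rule deriv0_eqI) (auto intro!: derivative_eq_intros)

lemma T_op_eq_min_integral: "T_op C u = min_integral (partial2 C u)"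
  by (simp add: fun_eq_iff T_op_def join_op_def partial2_Pi_cop min_integral_def set_integral_eq_integral_M01)

lemma partial2_T_op: "partial2 (T_op C) u = deriv0 (min_integral (partial2 C u))"
  by (simp add: partial2_eq_deriv0 T_op_eq_min_integral)

definition lipschitz_partial2 :: "(real \<Rightarrow> real \<Rightarrow> real) \<Rightarrow> bool" where
  "lipschitz_partial2 C \<longleftrightarrow> (\<forall>u\<in>{0..1}. unit_valued (partial2 C u)) \<and>
     (\<forall>u\<in>{0..1}. \<forall>u'\<in>{0..1}. L1_dist (partial2 C u) (partial2 C u') \<le> \<bar>u - u'\<bar>)"

lemma lipschitz_partial2_copula: "copula C \<Longrightarrow> lipschitz_partial2 C"
  by (simp add: lipschitz_partial2_def unit_valued_partial2 L1_dist_partial2_le)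

lemma lipschitz_partial2_unit_valued: "lipschitz_partial2 C \<Longrightarrow> u \<in> {0..1} \<Longrightarrow> unit_valued (partial2 C u)"
  by (simp add: lipschitz_partial2_def)

lemma lipschitz_partial2_L1_dist:
  "lipschitz_partial2 C \<Longrightarrow> u \<in> {0..1} \<Longrightarrow> u' \<in> {0..1} \<Longrightarrow> L1_dist (partial2 C u) (partial2 C u') \<le> \<bar>u - u'\<bar>"
  by (simp add: lipschitz_partial2_def)

lemma partial2_T_op_AE:
  "unit_valued (partial2 C u) \<Longrightarrow> AE t in M01. partial2 (T_op C) u t = survival (partial2 C u) t"
  unfolding partial2_T_op by (rule deriv0_min_integral_AE)

lemma unit_valued_partial2_T_op: "unit_valued (partial2 C u) \<Longrightarrow> unit_valued (partial2 (T_op C) u)"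
  unfolding partial2_T_op by (rule unit_valued_deriv0_min_integral)

lemma survival_partial2_T_op:
  "unit_valued (partial2 C u) \<Longrightarrow> survival (partial2 (T_op C) u) = survival (survival (partial2 C u))"
  by (rule survival_cong_AE)
    (auto simp: unit_valued_measurable unit_valued_partial2_T_op survival_measurable partial2_T_op_AE)

lemma L1_dist_partial2_T_op:
  assumes "unit_valued (partial2 C u)" "unit_valued (partial2 C' u')"
  shows "L1_dist (partial2 (T_op C) u) (partial2 (T_op C') u')
    = L1_dist (survival (partial2 C u)) (survival (partial2 C' u'))"
  using assms partial2_T_op_AE[OF assms(1)] partial2_T_op_AE[OF assms(2)]
  by (intro L1_dist_cong_AE) (simp_all add: unit_valued_measurable unit_valued_partial2_T_op survival_measurable)

lemma lipschitz_partial2_T_op: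
  assumes C: "lipschitz_partial2 C"
  shows "lipschitz_partial2 (T_op C)"
  unfolding lipschitz_partial2_def
proof safe
  fix u u' :: real assume u: "u \<in> {0..1}" "u' \<in> {0..1}"
  show "unit_valued (partial2 (T_op C) u)"
    using C u by (intro unit_valued_partial2_T_op lipschitz_partial2_unit_valued)
  have "L1_dist (partial2 (T_op C) u) (partial2 (T_op C) u') = L1_dist (survival (partial2 C u)) (survival (partial2 C u'))"
    using C u by (intro L1_dist_partial2_T_op lipschitz_partial2_unit_valued)
  also have "\<dots> \<le> L1_dist (partial2 C u) (partial2 C u')"
    using C u by (intro L1_dist_survival_le lipschitz_partial2_unit_valued)
  also have "\<dots> \<le> \<bar>u - u'\<bar>"
    using C u by (rule lipschitz_partial2_L1_dist)
  finally show "L1_dist (partial2 (T_op C) u) (partial2 (T_op C) u') \<le> \<bar>u - u'\<bar>" .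
qed

lemma T_op_dist_le:
  assumes C: "lipschitz_partial2 C" and u: "u \<in> {0..1}" "u' \<in> {0..1}"
  shows "\<bar>T_op C u v - T_op C u' v\<bar> \<le> \<bar>u - u'\<bar>"
  unfolding T_op_eq_min_integral
  using min_integral_dist_le_L1_dist[OF lipschitz_partial2_unit_valued[OF C u(1)] lipschitz_partial2_unit_valued[OF C u(2)]]
    lipschitz_partial2_L1_dist[OF C u] by (rule order_trans)

lemma partial2_conv_iff:
  "partial2_conv Cs C \<longleftrightarrow> (\<forall>u\<in>{0..1}. (\<lambda>n. L1_dist (partial2 (Cs n) u) (partial2 C u)) \<longlonglongrightarrow> 0)"
  unfolding partial2_conv_def L1_dist_def set_integral_eq_integral_M01 ..

lemma partial2_conv_T_op_iff:
  assumes Cs: "\<And>n. lipschitz_partial2 (Cs n)" and C: "lipschitz_partial2 C"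
  shows "partial2_conv (\<lambda>n. T_op (Cs n)) (T_op C) \<longleftrightarrow>
    (\<forall>u\<in>{0..1}. (\<lambda>n. L1_dist (survival (partial2 (Cs n) u)) (survival (partial2 C u))) \<longlonglongrightarrow> 0)"
  unfolding partial2_conv_iff
  using L1_dist_partial2_T_op[OF lipschitz_partial2_unit_valued[OF Cs] lipschitz_partial2_unit_valued[OF C]]
  by simp

lemma partial2_conv_T_op:
  assumes Cs: "\<And>n. lipschitz_partial2 (Cs n)" and C: "lipschitz_partial2 C"
    and conv: "partial2_conv Cs C"
  shows "partial2_conv (\<lambda>n. T_op (Cs n)) (T_op C)"
  unfolding partial2_conv_T_op_iff[OF Cs C]
proof
  fix u :: real assume u: "u \<in> {0..1}"
  have lim: "(\<lambda>n. L1_dist (partial2 (Cs n) u) (partial2 C u)) \<longlonglongrightarrow> 0"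
    using conv u by (simp add: partial2_conv_iff)
  have "\<forall>n. norm (L1_dist (survival (partial2 (Cs n) u)) (survival (partial2 C u)))
      \<le> L1_dist (partial2 (Cs n) u) (partial2 C u)"
    using lipschitz_partial2_unit_valued[OF Cs u] lipschitz_partial2_unit_valued[OF C u]
    by (simp add: L1_dist_nonneg L1_dist_survival_le)
  then show "(\<lambda>n. L1_dist (survival (partial2 (Cs n) u)) (survival (partial2 C u))) \<longlonglongrightarrow> 0"
    by (rule Lim_null_comparison[OF always_eventually lim])
qed

lemma partial2_conv_T_op_iff_T_op_T_op:
  assumes Cs: "\<And>n. lipschitz_partial2 (Cs n)" and C: "lipschitz_partial2 C"
  shows "partial2_conv (\<lambda>n. T_op (Cs n)) (T_op C) \<longleftrightarrow>
    partial2_conv (\<lambda>n. T_op (T_op (Cs n))) (T_op (T_op C))"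
  unfolding partial2_conv_T_op_iff[OF Cs C]
    partial2_conv_T_op_iff[OF lipschitz_partial2_T_op[OF Cs] lipschitz_partial2_T_op[OF C]]
  using tendsto_L1_dist_survival_iff_survival_survival
    lipschitz_partial2_unit_valued[OF Cs] lipschitz_partial2_unit_valued[OF C]
  by (simp add: survival_partial2_T_op)

lemma uniform_limit_unit_square:
  fixes F :: "nat \<Rightarrow> real \<Rightarrow> real \<Rightarrow> real" and G :: "real \<Rightarrow> real \<Rightarrow> real" and e :: "nat \<Rightarrow> real \<Rightarrow> real"
  assumes lipF: "\<And>n u u' v. u \<in> {0..1} \<Longrightarrow> u' \<in> {0..1} \<Longrightarrow> v \<in> {0..1} \<Longrightarrow> \<bar>F n u v - F n u' v\<bar> \<le> \<bar>u - u'\<bar>"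
    and lipG: "\<And>u u' v. u \<in> {0..1} \<Longrightarrow> u' \<in> {0..1} \<Longrightarrow> v \<in> {0..1} \<Longrightarrow> \<bar>G u v - G u' v\<bar> \<le> \<bar>u - u'\<bar>"
    and bnd: "\<And>n u v. u \<in> {0..1} \<Longrightarrow> v \<in> {0..1} \<Longrightarrow> \<bar>F n u v - G u v\<bar> \<le> e n u"
    and conv: "\<And>u. u \<in> {0..1} \<Longrightarrow> (\<lambda>n. e n u) \<longlonglongrightarrow> 0"
  shows "uniform_limit ({0..1} \<times> {0..1}) (\<lambda>n (u, v). F n u v) (\<lambda>(u, v). G u v) sequentially"
  unfolding uniform_limit_iff
proof (intro allI impI)
  fix \<epsilon> :: real assume "\<epsilon> > 0"
  define K :: nat where "K = nat \<lceil>3 / \<epsilon>\<rceil> + 1"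
  have K0: "real K > 0" unfolding K_def by simp
  have K3: "3 / \<epsilon> < real K" unfolding K_def by linarith
  then have Ke: "1 / real K < \<epsilon> / 3" using \<open>\<epsilon> > 0\<close> K0 by (simp add: field_simps)
  have grid: "real k / real K \<in> {0..1}" if "k \<le> K" for k using that K0 by (auto simp: field_simps)
  have "\<forall>\<^sub>F n in sequentially. \<forall>k\<in>{..K}. e n (real k / real K) < \<epsilon> / 3"
  proof (rule eventually_ball_finite)
    show "\<forall>k\<in>{..K}. \<forall>\<^sub>F n in sequentially. e n (real k / real K) < \<epsilon> / 3"
    proof
      fix k assume "k \<in> {..K}"
      then have "(\<lambda>n. e n (real k / real K)) \<longlonglongrightarrow> 0" using conv grid by auto
      moreover have "(0::real) < \<epsilon> / 3" using \<open>\<epsilon> > 0\<close> by simp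
      ultimately show "\<forall>\<^sub>F n in sequentially. e n (real k / real K) < \<epsilon> / 3" by (rule order_tendstoD)
    qed
  qed simp
  then show "\<forall>\<^sub>F n in sequentially. \<forall>x\<in>{0..1} \<times> {0..1}. dist ((\<lambda>(u, v). F n u v) x) ((\<lambda>(u, v). G u v) x) < \<epsilon>"
  proof eventually_elim
    case (elim n)
    show ?case
    proof (clarsimp simp: dist_real_def)
      fix u v :: real assume uv: "0 \<le> u" "u \<le> 1" "0 \<le> v" "v \<le> 1"
      define k where "k = nat \<lfloor>u * real K\<rfloor>"
      have k1: "real k \<le> u * real K" unfolding k_def using uv K0 by (simp add: of_nat_nat)
      have k2: "u * real K < real k + 1" unfolding k_def using uv K0 by (simp add: of_nat_nat)
      have "u * real K \<le> 1 * real K" using uv K0 by (intro mult_right_mono) auto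
      then have "real k \<le> real K" using k1 by linarith
      then have kK: "k \<le> K" by simp
      define uk where "uk = real k / real K"
      have uk: "uk \<in> {0..1}" unfolding uk_def using grid[OF kK] .
      have e1: "0 \<le> u * real K - real k" "u * real K - real k \<le> 1" using k1 k2 by linarith+
      have eq: "u - uk = (u * real K - real k) / real K" unfolding uk_def using K0 by (simp add: field_simps)
      have "0 \<le> u - uk" using eq e1 K0 by simp
      moreover have "u - uk \<le> 1 / real K" unfolding eq using e1 K0 by (simp add: divide_right_mono)
      ultimately have "\<bar>u - uk\<bar> \<le> 1 / real K" by simp
      then have d: "\<bar>u - uk\<bar> < \<epsilon> / 3" using Ke by linarith
      have "\<bar>F n u v - G u v\<bar> \<le> \<bar>F n u v - F n uk v\<bar> + \<bar>F n uk v - G uk v\<bar> + \<bar>G uk v - G u v\<bar>" by linarith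
      also have "\<dots> < \<epsilon> / 3 + \<epsilon> / 3 + \<epsilon> / 3"
      proof -
        have "\<bar>F n u v - F n uk v\<bar> \<le> \<bar>u - uk\<bar>" using lipF[of u uk v n] uv uk by auto
        moreover have "\<bar>G uk v - G u v\<bar> \<le> \<bar>u - uk\<bar>" using lipG[of uk u v] uv uk by (auto simp: abs_minus_commute)
        moreover have "\<bar>F n uk v - G uk v\<bar> < \<epsilon> / 3"
        proof -
          have "\<bar>F n uk v - G uk v\<bar> \<le> e n uk" using bnd[of uk v n] uv uk by auto
          moreover have "e n uk < \<epsilon> / 3" using elim kK unfolding uk_def by auto
          ultimately show ?thesis by linarith
        qed
        ultimately show ?thesis using d by linarith
      qed
      finally show "\<bar>F n u v - G u v\<bar> < \<epsilon>" by simp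
    qed
  qed
qed

lemma partial2_conv_T_op_iff_unif_conv:
  assumes Cs: "\<And>n. lipschitz_partial2 (Cs n)" and C: "lipschitz_partial2 C"
  shows "partial2_conv (\<lambda>n. T_op (Cs n)) (T_op C) \<longleftrightarrow> unif_conv_sq (\<lambda>n. T_op (Cs n)) (T_op C)"
proof
  assume "partial2_conv (\<lambda>n. T_op (Cs n)) (T_op C)"
  then have conv: "(\<lambda>n. L1_dist (survival (partial2 (Cs n) u)) (survival (partial2 C u))) \<longlonglongrightarrow> 0"
    if "u \<in> {0..1}" for u
    using that by (simp add: partial2_conv_T_op_iff[OF Cs C])
  show "unif_conv_sq (\<lambda>n. T_op (Cs n)) (T_op C)"
    unfolding unif_conv_sq_def
  proof (rule uniform_limit_unit_square[OF T_op_dist_le[OF Cs] T_op_dist_le[OF C] _ conv])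
    fix n :: nat and u v :: real assume "u \<in> {0..1}" "v \<in> {0..1}"
    then show "\<bar>T_op (Cs n) u v - T_op C u v\<bar> \<le> L1_dist (survival (partial2 (Cs n) u)) (survival (partial2 C u))"
      unfolding T_op_eq_min_integral
      by (intro min_integral_dist_le_L1_dist_survival lipschitz_partial2_unit_valued[OF Cs]
          lipschitz_partial2_unit_valued[OF C]) auto
  qed
next
  assume unif: "unif_conv_sq (\<lambda>n. T_op (Cs n)) (T_op C)"
  show "partial2_conv (\<lambda>n. T_op (Cs n)) (T_op C)"
    unfolding partial2_conv_T_op_iff[OF Cs C]
  proof
    fix u :: real assume u: "u \<in> {0..1}"
    have "(\<lambda>n. min_integral (partial2 (Cs n) u) v) \<longlonglongrightarrow> min_integral (partial2 C u) v" if "v \<in> {0..1}" for v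
      using tendsto_uniform_limitI[OF unif[unfolded unif_conv_sq_def], of "(u, v)"] u that
      by (simp add: T_op_eq_min_integral)
    then show "(\<lambda>n. L1_dist (survival (partial2 (Cs n) u)) (survival (partial2 C u))) \<longlonglongrightarrow> 0"
      using tendsto_L1_dist_survival_iff_min_integral[where Xs="\<lambda>n. partial2 (Cs n) u",
          OF lipschitz_partial2_unit_valued[OF Cs u] lipschitz_partial2_unit_valued[OF C u]] by blast
  qed
qed

theorem mainTheorem18:
  fixes Ds :: "nat \<Rightarrow> real \<Rightarrow> real \<Rightarrow> real" and D :: "real \<Rightarrow> real \<Rightarrow> real"
  assumes "\<And>n. copula (Ds n)" and "copula D"
  shows "(partial2_conv Ds D \<longrightarrow> partial2_conv (\<lambda>n. T_op (Ds n)) (T_op D))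
    \<and> (partial2_conv (\<lambda>n. T_op (Ds n)) (T_op D) \<longleftrightarrow> unif_conv_sq (\<lambda>n. T_op (Ds n)) (T_op D))
    \<and> (partial2_conv (\<lambda>n. T_op (Ds n)) (T_op D) \<longleftrightarrow>
         partial2_conv (\<lambda>n. T_op (T_op (Ds n))) (T_op (T_op D)))
    \<and> (partial2_conv (\<lambda>n. T_op (Ds n)) (T_op D) \<longleftrightarrow>
         unif_conv_sq (\<lambda>n. T_op (T_op (Ds n))) (T_op (T_op D)))"
proof -
  have Ds: "\<And>n. lipschitz_partial2 (Ds n)" and D: "lipschitz_partial2 D"
    using assms by (simp_all add: lipschitz_partial2_copula)
  have TDs: "\<And>n. lipschitz_partial2 (T_op (Ds n))" and TD: "lipschitz_partial2 (T_op D)"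
    using Ds D by (simp_all add: lipschitz_partial2_T_op)
  show ?thesis
    using partial2_conv_T_op[where Cs=Ds, OF Ds D] partial2_conv_T_op_iff_unif_conv[where Cs=Ds, OF Ds D]
      partial2_conv_T_op_iff_T_op_T_op[where Cs=Ds, OF Ds D]
      partial2_conv_T_op_iff_unif_conv[where Cs="\<lambda>n. T_op (Ds n)", OF TDs TD]
    by blast
qed

end
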